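(* Assume Assumption A holds, $N=O(n^\alpha)$, $\alpha\ge0$; for some $0\le\theta<1/11$, $s_n^2=o((n\tau)^\theta)$; $\tau\to0$; $f_n\to0$ with $f_n=s_n(nN)^{1/q}((n\tau)^{-1}+N^{-1})+s_n\tau^{-2/q'}\sqrt{n\tau}\{b^2+(nb)^{-1}\}+\tau^{-2/q'}\sqrt{s_n\tau/b}$ for some $q'\ge2$, $2\le q\le s^*/2$; $(\log n)^4/(nb)\to0$; $M_n>c\log n$ ($c>0$); $M_n=o(s_n)$; $s_n/\log n\to\infty$. Let $s\in\{2,3\}$. Then: (i) if $m>4s_n$, there exist a constant $C>0$ and $\chi_1\in(0,1)$ such that $\Theta_{m,s}<C\chi_1^m$ and $\Xi_{m,s}<Cm\chi_1^m$; (ii) if $m\le4s_n$, then $\Theta_{m,s}=O(s_n)$ and $\Xi_{m,s}=O(s_n^2)$.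
   Context: Notation: $\|X\|_q=(\mathbb E|X|^q)^{1/q}$; $|\cdot|_F$ Frobenius norm; $a\vee b=\max\{a,b\}$. Model: $(\eta_i)_{i\in\mathbb Z}$ i.i.d. in a measurable space $\mathcal S$, $(\eta_i')$ an independent copy, $\mathcal F_i=(\ldots,\eta_{i-1},\eta_i)$, $\mathcal F_i^*=(\ldots,\eta_{-1},\eta_0',\eta_1,\ldots,\eta_i)$; for $j\in\mathbb Z$, $\mathcal F_i^{(j)}$ denotes $\mathcal F_i$ with $\eta_j$ replaced by $\eta_j'$. Errors $\boldsymbol\epsilon_i(u)=\mathbf H(i/n,u,\mathcal F_i)$ with a measurable centered filter $\mathbf H=(H_1,\dots,H_p)^\top$ that is locally stationary: $\max_j\sup_{u,t}\|H_j(t,u,\mathcal F_i)-H_j(t,u,\mathcal F_i^* )\|_1=O(\chi^i)$, $\chi\in(0,1)$, and $\max_j\|H_j(t_1,u,\mathcal F_0)-H_j(t_2,u,\mathcal F_0)\|_2\le K_0|t_1-t_2|$. (Observations are $\mathbf X_{i,n}(u)=\mathbf m(i/n,u)+\boldsymbol\epsilon_i(u)$.) $\boldsymbol\Gamma_k(t,u)=\mathrm{Cov}(\mathbf H(t,u,\mathcal F_0),\mathbf H(t,u,\mathcal F_k))$. Assumption A: (1) $\sup_{u,t}\mathbb E\exp(t_0|H_j(t,u,\mathcal F_0)|)<c_0$; (2) $u$-derivatives $L_j$ of $H_j$ exist with $\sup_{t,u}\|L_j(t,u,\mathcal F_i)-L_j(t,u,\mathcal F_i^* )\|_{s^*}=O(\chi_0^i)$,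 $s^*\ge4$, and $\sup_{t,u}\|L_j(t,u,\mathcal F_i)\|_{s^*}<M_0$; (3) $t\mapsto\mathbf m(t,u)$ thrice differentiable with $\sup|\partial_t^3\mathbf m|_F\le M_1$; (4) $\lambda_{\min}(\boldsymbol\Gamma_0\boldsymbol\Gamma_0^\top)\ge c>0$. Quantities: $K$ symmetric kernel on $(-1,1)$, $\int K=1$, $K_\tau(x)=K(x/\tau)$; $b,\tau\in(0,1)$, integers $s_n,M_n,N$. $\boldsymbol\phi_{i,k}(u)=\boldsymbol\epsilon_{i-k}(u)\boldsymbol\epsilon_i(u)^\top$, $\boldsymbol\psi_{i,k}(t,u)=\sum_{\ell=(i-s_n)\vee1}^{i-M_n-1}\boldsymbol\phi_{\ell,k}(u)K_\tau(\ell/n-t)$, $\mathbf W(t,u,i/n,\mathcal F_i)=s_n^{-1}\sum_{k=1}^{s_n}\{\boldsymbol\phi_{i,k}(u)\boldsymbol\psi_{i,k}(t,u)^\top+\boldsymbol\psi_{i,k}(t,u)\boldsymbol\phi_{i,k}(u)^\top\}$ (a function of the innovations in $\mathcal F_i$), with entries $W_{r,j}$; $\mathbf W(t,u,i/n,\mathcal F_i^{(i-l)})$ is the same quantity with every innovation $\eta_{i-l}$ replaced by $\eta_{i-l}'$. Define $\theta_{l,s}=\sup_{t,u\in[0,1],1\le i\le n}\big\|\sum_{r=1}^p\{W_{r,r}(t,u,i/n,\mathcal F_i)-W_{r,r}(t,u,i/n,\mathcal F_i^{(i-l)})\}\big\|_s$, $\Theta_{m,s}=\sum_{l=m}^\infty\theta_{l,s}$,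 $\Xi_{m,s}=\sum_{l=m}^\infty l\,\theta_{l,s}$. *)

theory Defs
  imports "HOL-Probability.Probability" "HOL-Library.Landau_Symbols"
begin

definition Lnorm :: "'w measure \<Rightarrow> real \<Rightarrow> ('w \<Rightarrow> real) \<Rightarrow> ennreal" where
  "Lnorm M q X =
     (let I = (\<integral>\<^sup>+ \<omega>. ennreal (\<bar>X \<omega>\<bar> powr q) \<partial>M)
      in if I = \<infinity> then \<infinity> else ennreal (enn2real I powr (1 / q)))"

text \<open>The past F_i = (..., eta_{i-1}, eta_i), written as a backward sequence: k-th entry eta_{i-k}.\<close>
definition Fseq :: "(int \<Rightarrow> 'w \<Rightarrow> 's) \<Rightarrow> int \<Rightarrow> 'w \<Rightarrow> (nat \<Rightarrow> 's)" where
  "Fseq \<eta> i \<omega> = (\<lambda>k. \<eta> (i - int k) \<omega>)"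

definition perturb :: "(int \<Rightarrow> 'w \<Rightarrow> 's) \<Rightarrow> (int \<Rightarrow> 'w \<Rightarrow> 's) \<Rightarrow> int \<Rightarrow> int \<Rightarrow> 'w \<Rightarrow> 's" where
  "perturb \<eta> \<eta>' j = (\<lambda>k. if k = j then \<eta>' k else \<eta> k)"

definition eps :: "(real \<Rightarrow> real \<Rightarrow> (nat \<Rightarrow> 's) \<Rightarrow> real^'p) \<Rightarrow> (int \<Rightarrow> 'w \<Rightarrow> 's) \<Rightarrow> nat
                   \<Rightarrow> real \<Rightarrow> int \<Rightarrow> 'w \<Rightarrow> real^'p" where
  "eps H \<eta> n u l \<omega> = H (real_of_int l / real n) u (Fseq \<eta> l \<omega>)"

definition outer :: "real^'p \<Rightarrow> real^'p \<Rightarrow> real^'p^'p" where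
  "outer a b = (\<chi> r j. a $ r * b $ j)"

definition phi where
  "phi H \<eta> n u l k \<omega> = outer (eps H \<eta> n u (l - int k) \<omega>) (eps H \<eta> n u l \<omega>)"

definition psi where
  "psi H \<eta> n (K :: real \<Rightarrow> real) (\<tau>::real) (sN::nat) (Mn::nat) t u i k \<omega> =
     (\<Sum>l \<in> {max (i - int sN) 1 .. i - int Mn - 1}.
         K ((real_of_int l / real n - t) / \<tau>) *\<^sub>R phi H \<eta> n u l k \<omega>)"

definition Wmat where
  "Wmat H \<eta> n K \<tau> sN Mn t u i \<omega> =
     (1 / real sN) *\<^sub>R (\<Sum>k \<in> {1..sN}.
        phi H \<eta> n u i k \<omega> ** transpose (psi H \<eta> n K \<tau> sN Mn t u i k \<omega>)
      + psi H \<eta> n K \<tau> sN Mn t u i k \<omega> ** transpose (phi H \<eta> n u i k \<omega>))"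

definition trW where
  "trW H \<eta> n K \<tau> sN Mn t u i \<omega> = (\<Sum>r\<in>UNIV. Wmat H \<eta> n K \<tau> sN Mn t u i \<omega> $ r $ r)"

definition theta where
  "theta M H \<eta> \<eta>' n K \<tau> sN Mn (s::real) (l::nat) =
     (SUP x \<in> {0..1::real} \<times> {0..1::real} \<times> {1..int n}.
        (case x of (t, u, i) \<Rightarrow>
          Lnorm M s (\<lambda>\<omega>. trW H \<eta> n K \<tau> sN Mn t u i \<omega>
                        - trW H (perturb \<eta> \<eta>' (i - int l)) n K \<tau> sN Mn t u i \<omega>)))"

definition Theta where
  "Theta M H \<eta> \<eta>' n K \<tau> sN Mn s m = (\<Sum>l. theta M H \<eta> \<eta>' n K \<tau> sN Mn s (l + m))"

definition Xi where
  "Xi M H \<eta> \<eta>' n K \<tau> sN Mn s m =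
     (\<Sum>l. of_nat (l + m) * theta M H \<eta> \<eta>' n K \<tau> sN Mn s (l + m))"

text \<open>Gamma_0(t,u) = Cov(H(t,u,F_0), H(t,u,F_0)) (H is centered).\<close>
definition Gamma0 where
  "Gamma0 M H \<eta> t u = (\<chi> r j. \<integral>\<omega>. (H t u (Fseq \<eta> 0 \<omega>) $ r) * (H t u (Fseq \<eta> 0 \<omega>) $ j) \<partial>M)"

end

theory Submission
  imports Defs
begin

text \<open>
  Expanding tr W as a kernel-weighted sum of products of four error
  components, the change telescopes into terms that each contain exactly one coupled difference
  \<epsilon>(a) - \<epsilon>'(a). Its L1 norm is O(\<chi>^|a - (i - l)|) by physical dependence, and two
  Cauchy--Schwarz steps against the exponential moments of Assumption A(1) turn this into an
  L^s bound of order \<rho>^|a - (i - l)| with \<rho> = \<chi>^(1/12). Hence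
  \<theta>(l) \<le> C / s_n \<cdot> \<Sum> k, a \<le> s_n. \<Sum> d \<in> {k, a + k, 0, a}. \<rho>^|l - d|.
  Summing over l \<ge> m gives \<Theta>(m) = O(s_n) and \<Xi>(m) = O(s_n^2); once m > 4 s_n, every offset
  d \<le> 2 s_n is below m/2, so the tails decay like \<rho>^(m/2).
\<close>

section \<open>Moment inequalities\<close>

lemma nn_integral_mult_le_sqrt:
  fixes f g :: "'a \<Rightarrow> real"
  assumes [measurable]: "f \<in> borel_measurable M" "g \<in> borel_measurable M"
    and nonneg: "\<And>x. f x \<ge> 0" "\<And>x. g x \<ge> 0"
    and f_sq: "(\<integral>\<^sup>+x. ennreal (f x ^ 2) \<partial>M) \<le> ennreal A"
    and g_sq: "(\<integral>\<^sup>+x. ennreal (g x ^ 2) \<partial>M) \<le> ennreal B"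
    and "A \<ge> 0" "B \<ge> 0"
  shows "(\<integral>\<^sup>+x. ennreal (f x * g x) \<partial>M) \<le> ennreal (sqrt (A * B))"
proof -
  let ?I = "\<integral>\<^sup>+x. ennreal (f x * g x) \<partial>M"
  have "?I\<^sup>2 \<le> (\<integral>\<^sup>+x. ennreal (f x) ^ 2 \<partial>M) * (\<integral>\<^sup>+x. ennreal (g x) ^ 2 \<partial>M)"
    using Cauchy_Schwarz_nn_integral[of "\<lambda>x. ennreal (f x)" M "\<lambda>x. ennreal (g x)"]
    by (simp add: ennreal_mult nonneg)
  also have "\<dots> \<le> ennreal A * ennreal B"
    using f_sq g_sq by (intro mult_mono) (auto simp: ennreal_power nonneg)
  also have "\<dots> = ennreal (A * B)"
    using assms(7,8) by (simp add: ennreal_mult)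
  finally have I_sq: "?I ^ 2 \<le> ennreal (A * B)" .
  obtain r where r: "?I = ennreal r" "r \<ge> 0"
    using I_sq by (cases ?I) (auto simp: top_unique)
  then have "r ^ 2 \<le> A * B"
    using I_sq assms(7,8) by (simp add: ennreal_power)
  then show ?thesis
    using r by (simp add: ennreal_leI real_le_rsqrt)
qed

lemma power_convex_combination_le:
  fixes w y :: "'i \<Rightarrow> real"
  assumes "finite I" "I \<noteq> {}" "sum w I = 1" "\<And>i. i \<in> I \<Longrightarrow> w i \<ge> 0"
    "\<And>i. i \<in> I \<Longrightarrow> y i \<ge> 0"
  shows "(\<Sum>i\<in>I. w i * y i) ^ p \<le> (\<Sum>i\<in>I. w i * y i ^ p)"
proof -
  have "convex_on {0..} (\<lambda>x::real. x ^ p)"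
    by (cases "even p") (auto intro: convex_power_odd convex_on_subset[OF convex_power_even])
  from convex_on_sum[OF assms(1-2) this assms(3-4)] show ?thesis
    using assms(5) by auto
qed

lemma power_abs_sum_le_weighted:
  fixes f b :: "'i \<Rightarrow> real"
  assumes I: "finite I" and b: "\<And>i. i \<in> I \<Longrightarrow> b i > 0" and p: "p \<ge> 1"
  shows "\<bar>\<Sum>i\<in>I. f i\<bar> ^ p \<le> (\<Sum>i\<in>I. b i) ^ (p - 1) * (\<Sum>i\<in>I. \<bar>f i\<bar> ^ p / b i ^ (p - 1))"
proof (cases "I = {}")
  case True
  then show ?thesis using p by (simp add: power_0_left)
next
  case False
  define W where "W = (\<Sum>i\<in>I. b i)"
  have W: "W > 0"
    unfolding W_def using I False b by (simp add: sum_pos)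
  have "\<bar>\<Sum>i\<in>I. f i\<bar> \<le> (\<Sum>i\<in>I. \<bar>f i\<bar>)"
    by (rule sum_abs)
  also have "\<dots> = W * (\<Sum>i\<in>I. (b i / W) * (\<bar>f i\<bar> / b i))"
    unfolding sum_distrib_left using b W by (intro sum.cong) force+
  finally have "\<bar>\<Sum>i\<in>I. f i\<bar> ^ p \<le> W ^ p * (\<Sum>i\<in>I. (b i / W) * (\<bar>f i\<bar> / b i)) ^ p"
    by (simp add: power_mono flip: power_mult_distrib)
  also have "\<dots> \<le> W ^ p * (\<Sum>i\<in>I. (b i / W) * (\<bar>f i\<bar> / b i) ^ p)"
    using I False b W
    by (intro mult_left_mono power_convex_combination_le)
      (auto simp: W_def less_imp_le simp flip: sum_divide_distrib)
  also have "\<dots> = W ^ (p - 1) * (\<Sum>i\<in>I. \<bar>f i\<bar> ^ p / b i ^ (p - 1))"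
    unfolding sum_distrib_left
  proof (rule sum.cong[OF refl])
    fix i assume i: "i \<in> I"
    have "W ^ p = W * W ^ (p - 1)" "b i ^ p = b i * b i ^ (p - 1)"
      using p by (metis Suc_diff_le diff_Suc_1 power_Suc)+
    then show "W ^ p * (b i / W * (\<bar>f i\<bar> / b i) ^ p) = W ^ (p - 1) * (\<bar>f i\<bar> ^ p / b i ^ (p - 1))"
      using b[OF i] W by (simp add: power_divide field_simps)
  qed
  finally show ?thesis
    unfolding W_def .
qed

lemma nn_integral_power_abs_sum_le:
  fixes f :: "'i \<Rightarrow> 'a \<Rightarrow> real" and b :: "'i \<Rightarrow> real"
  assumes I: "finite I" and f: "\<And>i. i \<in> I \<Longrightarrow> f i \<in> borel_measurable M"
    and b: "\<And>i. i \<in> I \<Longrightarrow> b i > 0"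
    and moments: "\<And>i. i \<in> I \<Longrightarrow> (\<integral>\<^sup>+x. ennreal (\<bar>f i x\<bar> ^ p) \<partial>M) \<le> ennreal (b i ^ p)"
    and p: "p \<ge> 1"
  shows "(\<integral>\<^sup>+x. ennreal (\<bar>\<Sum>i\<in>I. f i x\<bar> ^ p) \<partial>M) \<le> ennreal ((\<Sum>i\<in>I. b i) ^ p)"
proof -
  define W where "W = (\<Sum>i\<in>I. b i)"
  define c where "c i = W ^ (p - 1) / b i ^ (p - 1)" for i
  have c: "c i \<ge> 0" if "i \<in> I" for i
    using b[OF that] sum_nonneg[of I b] b by (auto simp: c_def W_def less_imp_le)
  have "(\<integral>\<^sup>+x. ennreal (\<bar>\<Sum>i\<in>I. f i x\<bar> ^ p) \<partial>M) \<le> (\<integral>\<^sup>+x. (\<Sum>i\<in>I. ennreal (c i) * ennreal (\<bar>f i x\<bar> ^ p)) \<partial>M)"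
  proof (rule nn_integral_mono)
    fix x
    have "\<bar>\<Sum>i\<in>I. f i x\<bar> ^ p \<le> (\<Sum>i\<in>I. c i * \<bar>f i x\<bar> ^ p)"
      using power_abs_sum_le_weighted[OF I b p, where f="\<lambda>i. f i x"]
      by (simp add: c_def W_def sum_distrib_left)
    then have "ennreal (\<bar>\<Sum>i\<in>I. f i x\<bar> ^ p) \<le> ennreal (\<Sum>i\<in>I. c i * \<bar>f i x\<bar> ^ p)"
      by (rule ennreal_leI)
    also have "\<dots> = (\<Sum>i\<in>I. ennreal (c i) * ennreal (\<bar>f i x\<bar> ^ p))"
      using c by (simp add: ennreal_mult flip: sum_ennreal)
    finally show "ennreal (\<bar>\<Sum>i\<in>I. f i x\<bar> ^ p) \<le> (\<Sum>i\<in>I. ennreal (c i) * ennreal (\<bar>f i x\<bar> ^ p))" .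
  qed
  also have "\<dots> = (\<Sum>i\<in>I. ennreal (c i) * (\<integral>\<^sup>+x. ennreal (\<bar>f i x\<bar> ^ p) \<partial>M))"
    using f by (subst nn_integral_sum) (auto simp: nn_integral_cmult I)
  also have "\<dots> \<le> (\<Sum>i\<in>I. ennreal (c i) * ennreal (b i ^ p))"
    by (intro sum_mono mult_left_mono moments) auto
  also have "\<dots> = ennreal (\<Sum>i\<in>I. c i * b i ^ p)"
    using c b by (simp add: ennreal_mult less_imp_le flip: sum_ennreal)
  also have "(\<Sum>i\<in>I. c i * b i ^ p) = (\<Sum>i\<in>I. W ^ (p - 1) * b i)"
  proof (rule sum.cong[OF refl])
    fix i assume "i \<in> I"
    moreover have "b i ^ p = b i * b i ^ (p - 1)"
      using p by (metis Suc_diff_le diff_Suc_1 power_Suc)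
    ultimately show "c i * b i ^ p = W ^ (p - 1) * b i"
      using b by (simp add: c_def)
  qed
  also have "\<dots> = W ^ p"
    using p unfolding W_def sum_distrib_left[symmetric] by (metis Suc_diff_le diff_Suc_1 power_Suc2)
  finally show ?thesis
    unfolding W_def .
qed

lemma power_product3_le:
  fixes u v t :: real
  assumes "u \<ge> 0" "v \<ge> 0" "t \<ge> 0"
  shows "(u * v * t) ^ m \<le> u ^ (3 * m) + v ^ (3 * m) + t ^ (3 * m)"
proof -
  define X where "X = max u (max v t)"
  have "(u * v * t) ^ m \<le> (X * X * X) ^ m"
    unfolding X_def using assms by (intro power_mono mult_mono) auto
  also have "\<dots> = X ^ (3 * m)"
    by (simp add: power_mult power3_eq_cube)
  also have "\<dots> \<le> u ^ (3 * m) + v ^ (3 * m) + t ^ (3 * m)"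
    unfolding X_def using assms by (auto simp: max_def)
  finally show ?thesis .
qed

lemma power_abs_diff_le: "\<bar>u - v\<bar> ^ k \<le> 2 ^ k * (\<bar>u\<bar> ^ k + \<bar>v\<bar> ^ k :: real)"
proof -
  define X where "X = max \<bar>u\<bar> \<bar>v\<bar>"
  have "\<bar>u - v\<bar> ^ k \<le> (2 * X) ^ k"
    unfolding X_def by (intro power_mono) auto
  also have "\<dots> = 2 ^ k * X ^ k"
    by (simp add: power_mult_distrib)
  also have "X ^ k \<le> \<bar>u\<bar> ^ k + \<bar>v\<bar> ^ k"
    unfolding X_def by (auto simp: max_def)
  finally show ?thesis by simp
qed

lemma nn_integral_power_product3_le:
  assumes [measurable]: "y \<in> borel_measurable M" "z \<in> borel_measurable M" "w \<in> borel_measurable M"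
  shows "(\<integral>\<^sup>+x. ennreal (\<bar>y x * z x * w x\<bar> ^ k) \<partial>M)
    \<le> (\<integral>\<^sup>+x. ennreal (\<bar>y x\<bar> ^ (3 * k)) \<partial>M) + (\<integral>\<^sup>+x. ennreal (\<bar>z x\<bar> ^ (3 * k)) \<partial>M)
      + (\<integral>\<^sup>+x. ennreal (\<bar>w x\<bar> ^ (3 * k)) \<partial>M)"
proof -
  have "ennreal (\<bar>y x * z x * w x\<bar> ^ k)
      \<le> ennreal (\<bar>y x\<bar> ^ (3 * k)) + ennreal (\<bar>z x\<bar> ^ (3 * k)) + ennreal (\<bar>w x\<bar> ^ (3 * k))" for x
    using power_product3_le[of "\<bar>y x\<bar>" "\<bar>z x\<bar>" "\<bar>w x\<bar>" k]
    by (simp add: abs_mult ennreal_leI flip: ennreal_plus)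
  then have "(\<integral>\<^sup>+x. ennreal (\<bar>y x * z x * w x\<bar> ^ k) \<partial>M)
      \<le> (\<integral>\<^sup>+x. ennreal (\<bar>y x\<bar> ^ (3 * k)) + ennreal (\<bar>z x\<bar> ^ (3 * k)) + ennreal (\<bar>w x\<bar> ^ (3 * k)) \<partial>M)"
    by (rule nn_integral_mono)
  also have "\<dots> = (\<integral>\<^sup>+x. ennreal (\<bar>y x\<bar> ^ (3 * k)) \<partial>M) + (\<integral>\<^sup>+x. ennreal (\<bar>z x\<bar> ^ (3 * k)) \<partial>M)
      + (\<integral>\<^sup>+x. ennreal (\<bar>w x\<bar> ^ (3 * k)) \<partial>M)"
    by (simp add: nn_integral_add)
  finally show ?thesis .
qed

lemma nn_integral_power_abs_diff_le:
  assumes [measurable]: "a \<in> borel_measurable M" "a' \<in> borel_measurable M"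
  shows "(\<integral>\<^sup>+x. ennreal (\<bar>a x - a' x\<bar> ^ k) \<partial>M)
    \<le> ennreal (2 ^ k) * ((\<integral>\<^sup>+x. ennreal (\<bar>a x\<bar> ^ k) \<partial>M) + (\<integral>\<^sup>+x. ennreal (\<bar>a' x\<bar> ^ k) \<partial>M))"
proof -
  have "ennreal (\<bar>a x - a' x\<bar> ^ k) \<le> ennreal (2 ^ k) * (ennreal (\<bar>a x\<bar> ^ k) + ennreal (\<bar>a' x\<bar> ^ k))" for x
    using power_abs_diff_le[of "a x" "a' x" k] by (simp add: ennreal_leI flip: ennreal_plus ennreal_mult)
  then have "(\<integral>\<^sup>+x. ennreal (\<bar>a x - a' x\<bar> ^ k) \<partial>M)
      \<le> (\<integral>\<^sup>+x. ennreal (2 ^ k) * (ennreal (\<bar>a x\<bar> ^ k) + ennreal (\<bar>a' x\<bar> ^ k)) \<partial>M)"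
    by (rule nn_integral_mono)
  then show ?thesis
    by (simp add: nn_integral_cmult nn_integral_add)
qed

text \<open>Since \<open>D ^ (2 * p) = sqrt D * (sqrt D * D ^ (2 * p - 1))\<close>, Cauchy--Schwarz bounds the
  \<open>2p\<close>-th moment by the first and the \<open>(4p - 1)\<close>-th ones.\<close>

lemma nn_integral_power_interpolate_le:
  fixes D :: "'a \<Rightarrow> real"
  assumes [measurable]: "D \<in> borel_measurable M" and D: "\<And>x. D x \<ge> 0" and p: "p \<ge> 1"
    and first: "(\<integral>\<^sup>+x. ennreal (D x) \<partial>M) \<le> ennreal \<delta>"
    and high: "(\<integral>\<^sup>+x. ennreal (D x ^ (4 * p - 1)) \<partial>M) \<le> ennreal B"
    and "\<delta> \<ge> 0" "B \<ge> 0"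
  shows "(\<integral>\<^sup>+x. ennreal (D x ^ (2 * p)) \<partial>M) \<le> ennreal (sqrt (\<delta> * B))"
proof -
  have split: "D x ^ (2 * p) = sqrt (D x) * (sqrt (D x) * D x ^ (2 * p - 1))" for x
  proof -
    have "sqrt (D x) * (sqrt (D x) * D x ^ (2 * p - 1)) = D x * D x ^ (2 * p - 1)"
      using D by (simp flip: mult.assoc)
    also have "\<dots> = D x ^ (2 * p)"
      using p by (cases p) (auto simp flip: power_Suc)
    finally show ?thesis ..
  qed
  have "(sqrt (D x) * D x ^ (2 * p - 1)) ^ 2 = D x ^ (4 * p - 1)" for x
  proof -
    have "(sqrt (D x) * D x ^ (2 * p - 1)) ^ 2 = D x * D x ^ (2 * (2 * p - 1))"
      using D by (simp add: power_mult_distrib power_mult[symmetric] mult.commute)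
    also have "\<dots> = D x ^ (4 * p - 1)"
      using p by (cases p) (auto simp flip: power_Suc intro!: arg_cong[where f="\<lambda>k. D x ^ k"])
    finally show ?thesis .
  qed
  then show ?thesis
    unfolding split using D first high assms(6,7)
    by (intro nn_integral_mult_le_sqrt) auto
qed

lemma nn_integral_power_diff_product_le:
  fixes a a' y z w :: "'a \<Rightarrow> real"
  assumes meas [measurable]: "a \<in> borel_measurable M" "a' \<in> borel_measurable M" "y \<in> borel_measurable M"
     "z \<in> borel_measurable M" "w \<in> borel_measurable M"
  and moments: "\<And>v k. v \<in> {a, a', y, z, w} \<Longrightarrow> k \<le> 18 \<Longrightarrow> (\<integral>\<^sup>+x. ennreal (\<bar>v x\<bar> ^ k) \<partial>M) \<le> ennreal Mb"
  and first: "(\<integral>\<^sup>+x. ennreal \<bar>a x - a' x\<bar> \<partial>M) \<le> ennreal \<delta>"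
  and "\<delta> \<ge> 0" "Mb \<ge> 0" and p: "1 \<le> p" "p \<le> 3"
  shows "(\<integral>\<^sup>+x. ennreal (\<bar>(a x - a' x) * y x * z x * w x\<bar> ^ p) \<partial>M)
           \<le> ennreal (sqrt (sqrt (\<delta> * (2 ^ 12 * Mb)) * (3 * Mb)))"
proof -
  have "(\<integral>\<^sup>+x. ennreal (\<bar>a x - a' x\<bar> ^ (4 * p - 1)) \<partial>M) \<le> ennreal (2 ^ (4 * p - 1)) * (ennreal Mb + ennreal Mb)"
    using nn_integral_power_abs_diff_le[of a M a' "4 * p - 1"] p
    by (auto intro!: mult_left_mono add_mono moments elim!: order_trans)
  also have "\<dots> = ennreal (2 ^ (4 * p - 1) * (2 * Mb))"
    using \<open>Mb \<ge> 0\<close> by (simp flip: ennreal_plus ennreal_mult)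
  also have "\<dots> \<le> ennreal (2 ^ 11 * (2 * Mb))"
    using p \<open>Mb \<ge> 0\<close> by (intro ennreal_leI mult_right_mono power_increasing) auto
  finally have "(\<integral>\<^sup>+x. ennreal ((\<bar>a x - a' x\<bar> ^ p) ^ 2) \<partial>M) \<le> ennreal (sqrt (\<delta> * (2 ^ 12 * Mb)))"
    using nn_integral_power_interpolate_le[where D="\<lambda>x. \<bar>a x - a' x\<bar>" and p=p and \<delta>=\<delta> and B="2 ^ 12 * Mb"] first p \<open>\<delta> \<ge> 0\<close> \<open>Mb \<ge> 0\<close>
    by (simp add: power_mult[symmetric] mult.commute)
  moreover have "(\<integral>\<^sup>+x. ennreal ((\<bar>y x * z x * w x\<bar> ^ p) ^ 2) \<partial>M) \<le> ennreal Mb + ennreal Mb + ennreal Mb"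
  proof -
    have "(\<integral>\<^sup>+x. ennreal (\<bar>y x * z x * w x\<bar> ^ (p * 2)) \<partial>M)
        \<le> (\<integral>\<^sup>+x. ennreal (\<bar>y x\<bar> ^ (3 * (p * 2))) \<partial>M) + (\<integral>\<^sup>+x. ennreal (\<bar>z x\<bar> ^ (3 * (p * 2))) \<partial>M)
          + (\<integral>\<^sup>+x. ennreal (\<bar>w x\<bar> ^ (3 * (p * 2))) \<partial>M)"
      by (rule nn_integral_power_product3_le) measurable
    also have "\<dots> \<le> ennreal Mb + ennreal Mb + ennreal Mb"
      using p by (intro add_mono moments) auto
    finally show ?thesis
      by (simp only: power_mult)
  qed
  ultimately have "(\<integral>\<^sup>+x. ennreal (\<bar>a x - a' x\<bar> ^ p * \<bar>y x * z x * w x\<bar> ^ p) \<partial>M)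
      \<le> ennreal (sqrt (sqrt (\<delta> * (2 ^ 12 * Mb)) * (3 * Mb)))"
    using \<open>\<delta> \<ge> 0\<close> \<open>Mb \<ge> 0\<close> by (intro nn_integral_mult_le_sqrt) (auto simp flip: ennreal_plus)
  then show ?thesis
    by (simp add: abs_mult power_mult_distrib mult.assoc)
qed

lemma power_div_fact_le_exp:
  fixes y :: real assumes "y \<ge> 0"
  shows "y ^ n / fact n \<le> exp y"
proof -
  have s: "summable (\<lambda>n. y ^ n /\<^sub>R fact n)" using exp_converges[of y] sums_summable by blast
  have "(\<Sum>i\<in>{n}. y ^ i /\<^sub>R fact i) \<le> (\<Sum>i. y ^ i /\<^sub>R fact i)"
    by (rule sum_le_suminf[OF s]) (use assms in auto)
  also have "\<dots> = exp y" using exp_converges[of y] sums_unique by metis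
  finally show ?thesis by (simp add: divide_inverse mult.commute)
qed

lemma power_abs_le_exp:
  fixes x t :: real
  assumes t: "t > 0" and k: "k \<le> N"
  shows "\<bar>x\<bar> ^ k \<le> 1 + fact N / t ^ N * exp (t * \<bar>x\<bar>)"
proof (cases "\<bar>x\<bar> \<le> 1")
  case True
  then have "\<bar>x\<bar> ^ k \<le> 1"
    by (simp add: power_le_one)
  moreover have "0 \<le> fact N / t ^ N * exp (t * \<bar>x\<bar>)"
    using t by simp
  ultimately show ?thesis by linarith
next
  case False
  then have "\<bar>x\<bar> ^ k \<le> \<bar>x\<bar> ^ N"
    using k by (intro power_increasing) auto
  also have "\<dots> = fact N / t ^ N * ((t * \<bar>x\<bar>) ^ N / fact N)"
    using t by (simp add: power_mult_distrib)
  also have "\<dots> \<le> fact N / t ^ N * exp (t * \<bar>x\<bar>)"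
    using t by (intro mult_left_mono power_div_fact_le_exp) auto
  finally show ?thesis by linarith
qed

lemma Lnorm_1: "Lnorm M 1 f = (\<integral>\<^sup>+x. ennreal \<bar>f x\<bar> \<partial>M)"
  by (auto simp: Lnorm_def Let_def ennreal_enn2real_if)

lemma Lnorm_le_of_nn_integral_power_le:
  assumes p: "p \<ge> 1" and B: "B \<ge> 0" and I: "(\<integral>\<^sup>+x. ennreal (\<bar>f x\<bar>^p) \<partial>M) \<le> ennreal (B^p)"
  shows "Lnorm M (real p) f \<le> ennreal B"
proof -
  have eq: "\<bar>f x\<bar> powr real p = \<bar>f x\<bar>^p" for x
    using p by (cases "f x = 0") (auto simp: powr_realpow)
  let ?I = "\<integral>\<^sup>+x. ennreal (\<bar>f x\<bar> powr real p) \<partial>M"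
  have I2: "?I \<le> ennreal (B^p)" using I eq by simp
  have fin: "?I \<noteq> top" by (rule neq_top_trans[OF ennreal_neq_top I2])
  have "enn2real ?I \<le> B^p" using I2 B by (simp add: enn2real_leI)
  then have "enn2real ?I powr (1/real p) \<le> (B^p) powr (1/real p)" by (intro powr_mono2) auto
  also have "(B^p) powr (1/real p) = B" using p B
    by (simp add: root_powr_inverse[symmetric] real_root_power_cancel)
  finally show ?thesis using fin unfolding Lnorm_def Let_def by (simp add: ennreal_leI)
qed

section \<open>Independent innovations\<close>

lemma (in prob_space) indep_sets_reindex:
  assumes f: "inj_on f I" and ind: "indep_sets F (f ` I)"
  shows "indep_sets (\<lambda>i. F (f i)) I"
  unfolding indep_sets_def
proof (intro conjI ballI allI impI)
  fix i assume "i \<in> I" then show "F (f i) \<subseteq> events" using ind by (auto simp: indep_sets_def)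
next
  fix J A assume J: "J \<subseteq> I" "J \<noteq> {}" "finite J" and A: "A \<in> Pi J (\<lambda>i. F (f i))"
  define A' where "A' j = A (the_inv_into J f j)" for j
  have fJ: "inj_on f J" using f J inj_on_subset by blast
  have A'f: "A' (f i) = A i" if "i \<in> J" for i using fJ that by (simp add: A'_def the_inv_into_f_f)
  have "prob (\<Inter>j\<in>f ` J. A' j) = (\<Prod>j\<in>f ` J. prob (A' j))"
  proof -
    have "A' \<in> Pi (f ` J) F" using A A'f by (auto simp: Pi_iff)
    moreover have "f ` J \<subseteq> f ` I" "f ` J \<noteq> {}" "finite (f ` J)" using J by auto
    ultimately show ?thesis using ind unfolding indep_sets_def by blast
  qed
  moreover have "(\<Inter>j\<in>f ` J. A' j) = (\<Inter>i\<in>J. A i)" using A'f by auto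
  moreover have "(\<Prod>j\<in>f ` J. prob (A' j)) = (\<Prod>i\<in>J. prob (A i))"
    using fJ A'f by (simp add: prod.reindex)
  ultimately show "prob (\<Inter>j\<in>J. A j) = (\<Prod>j\<in>J. prob (A j))" by simp
qed

lemma (in prob_space) indep_vars_reindex:
  assumes f: "inj f" and ind: "indep_vars (\<lambda>_. S) X UNIV"
  shows "indep_vars (\<lambda>_. S) (\<lambda>n. X (f n)) UNIV"
proof -
  have "indep_vars (\<lambda>_. S) X (range f)" using ind by (rule indep_vars_subset) auto
  then show ?thesis
    unfolding indep_vars_def using indep_sets_reindex[OF f] by auto
qed

definition seq_tail :: "(nat \<Rightarrow> 's) \<Rightarrow> nat \<Rightarrow> 's" where
  "seq_tail z = (\<lambda>k. z (Suc k))"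

definition seq_tail_patch :: "int \<Rightarrow> (nat \<Rightarrow> 's) \<Rightarrow> nat \<Rightarrow> 's" where
  "seq_tail_patch d z = (\<lambda>k. if int k = d then z 0 else z (Suc k))"

lemma measurable_seq_tail: "seq_tail \<in> measurable (PiM UNIV (\<lambda>_. S)) (PiM UNIV (\<lambda>_. S))"
  unfolding seq_tail_def
  by (intro measurable_PiM_single') (auto simp: space_PiM PiE_iff measurable_component_singleton)

lemma measurable_seq_tail_patch:
  "seq_tail_patch d \<in> measurable (PiM UNIV (\<lambda>_. S)) (PiM UNIV (\<lambda>_. S))"
  unfolding seq_tail_patch_def
  by (intro measurable_PiM_single') (auto simp: space_PiM PiE_iff measurable_component_singleton)

locale iid_innovations = prob_space M
  for M :: "'w measure" and S :: "'s measure" and \<eta> \<eta>' :: "int \<Rightarrow> 'w \<Rightarrow> 's" +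
  assumes indep_innovations: "indep_vars (\<lambda>_. S) (case_sum \<eta> \<eta>') UNIV"
    and identically_distributed:
      "\<forall>i. distr M S (\<eta> i) = distr M S (\<eta> 0) \<and> distr M S (\<eta>' i) = distr M S (\<eta> 0)"
begin

abbreviation "innovation_law \<equiv> PiM UNIV (\<lambda>_::nat. distr M S (\<eta> 0))"

lemma
  fixes f :: "nat \<Rightarrow> int + int"
  assumes f: "inj f"
  shows distr_innovations_reindex:
      "distr M (PiM UNIV (\<lambda>_. S)) (\<lambda>\<omega> n. case_sum \<eta> \<eta>' (f n) \<omega>) = innovation_law"
    and measurable_innovations_reindex:
      "(\<lambda>\<omega> n. case_sum \<eta> \<eta>' (f n) \<omega>) \<in> measurable M (PiM UNIV (\<lambda>_. S))"
proof -
  have indep: "indep_vars (\<lambda>_. S) (\<lambda>n. case_sum \<eta> \<eta>' (f n)) UNIV"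
    by (rule indep_vars_reindex[OF f indep_innovations])
  have rv: "random_variable S (case_sum \<eta> \<eta>' (f n))" for n
    using indep unfolding indep_vars_def by auto
  have "distr M (PiM UNIV (\<lambda>_. S)) (\<lambda>\<omega>. \<lambda>n\<in>UNIV. case_sum \<eta> \<eta>' (f n) \<omega>)
      = PiM UNIV (\<lambda>n. distr M S (case_sum \<eta> \<eta>' (f n)))"
    using indep_vars_iff_distr_eq_PiM[where I=UNIV and M'="\<lambda>_. S" and X="\<lambda>n. case_sum \<eta> \<eta>' (f n)"] indep rv
    by simp
  moreover have "distr M S (case_sum \<eta> \<eta>' (f n)) = distr M S (\<eta> 0)" for n
    using identically_distributed by (auto split: sum.split)
  ultimately show "distr M (PiM UNIV (\<lambda>_. S)) (\<lambda>\<omega> n. case_sum \<eta> \<eta>' (f n) \<omega>) = innovation_law"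
    by (simp add: restrict_def)
  show "(\<lambda>\<omega> n. case_sum \<eta> \<eta>' (f n) \<omega>) \<in> measurable M (PiM UNIV (\<lambda>_. S))"
    using rv measurable_space[OF rv] by (intro measurable_PiM_single') (auto simp: PiE_iff)
qed

lemma nn_integral_innovations_reindex:
  fixes f :: "nat \<Rightarrow> int + int"
  assumes f: "inj f" and g: "g \<in> borel_measurable (PiM UNIV (\<lambda>_. S))"
  shows "(\<integral>\<^sup>+\<omega>. g (\<lambda>n. case_sum \<eta> \<eta>' (f n) \<omega>) \<partial>M) = (\<integral>\<^sup>+z. g z \<partial>innovation_law)"
proof -
  have "(\<integral>\<^sup>+z. g z \<partial>innovation_law)
      = (\<integral>\<^sup>+z. g z \<partial>distr M (PiM UNIV (\<lambda>_. S)) (\<lambda>\<omega> n. case_sum \<eta> \<eta>' (f n) \<omega>))"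
    by (simp add: distr_innovations_reindex[OF f])
  also have "\<dots> = (\<integral>\<^sup>+\<omega>. g (\<lambda>n. case_sum \<eta> \<eta>' (f n) \<omega>) \<partial>M)"
    using g by (intro nn_integral_distr measurable_innovations_reindex[OF f]) simp
  finally show ?thesis ..
qed

lemma Fseq_eq_innovations: "Fseq \<eta> l \<omega> = (\<lambda>k. case_sum \<eta> \<eta>' (Inl (l - int k)) \<omega>)"
  by (simp add: Fseq_def)

lemma Fseq_perturb_eq_innovations:
  "Fseq (perturb \<eta> \<eta>' j) l \<omega> =
     (\<lambda>k. case_sum \<eta> \<eta>' (if l - int k = j then Inr j else Inl (l - int k)) \<omega>)"
  by (auto simp: Fseq_def perturb_def)

lemma inj_past_index: "inj (\<lambda>k::nat. Inl (l - int k) :: int + int)"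
  by (auto simp: inj_def)

lemma inj_perturbed_past_index:
  "inj (\<lambda>k::nat. if l - int k = j then Inr j else Inl (l - int k) :: int + int)"
  by (auto simp: inj_def split: if_splits)

lemma measurable_Fseq: "(\<lambda>\<omega>. Fseq \<eta> l \<omega>) \<in> measurable M (PiM UNIV (\<lambda>_. S))"
  unfolding Fseq_eq_innovations by (rule measurable_innovations_reindex[OF inj_past_index])

lemma measurable_Fseq_perturb:
  "(\<lambda>\<omega>. Fseq (perturb \<eta> \<eta>' j) l \<omega>) \<in> measurable M (PiM UNIV (\<lambda>_. S))"
  unfolding Fseq_perturb_eq_innovations
  by (rule measurable_innovations_reindex[OF inj_perturbed_past_index])

lemma nn_integral_Fseq:
  assumes "g \<in> borel_measurable (PiM UNIV (\<lambda>_. S))"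
  shows "(\<integral>\<^sup>+\<omega>. g (Fseq \<eta> l \<omega>) \<partial>M) = (\<integral>\<^sup>+z. g z \<partial>innovation_law)"
  unfolding Fseq_eq_innovations by (rule nn_integral_innovations_reindex[OF inj_past_index assms])

lemma nn_integral_Fseq_perturb:
  assumes "g \<in> borel_measurable (PiM UNIV (\<lambda>_. S))"
  shows "(\<integral>\<^sup>+\<omega>. g (Fseq (perturb \<eta> \<eta>' j) l \<omega>) \<partial>M) = (\<integral>\<^sup>+z. g z \<partial>innovation_law)"
  unfolding Fseq_perturb_eq_innovations
  by (rule nn_integral_innovations_reindex[OF inj_perturbed_past_index assms])

text \<open>Both \<open>Fseq \<eta> a\<close> and \<open>Fseq (perturb \<eta> \<eta>' b) a\<close> are read off the i.i.d. sequence
  \<open>\<eta>' b, \<eta> a, \<eta> (a - 1), \<dots>\<close> in a way that depends on \<open>a - b\<close> only.\<close>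

lemma Fseq_coupling_eq:
  fixes a b :: int
  defines "z \<equiv> \<lambda>\<omega> n. case_sum \<eta> \<eta>' (case n of 0 \<Rightarrow> Inr b | Suc k \<Rightarrow> Inl (a - int k)) \<omega>"
  shows "Fseq \<eta> a \<omega> = seq_tail (z \<omega>)"
    and "Fseq (perturb \<eta> \<eta>' b) a \<omega> = seq_tail_patch (a - b) (z \<omega>)"
  by (auto simp: z_def seq_tail_def seq_tail_patch_def Fseq_def perturb_def)

lemma nn_integral_perturb_shift:
  assumes h: "h \<in> borel_measurable (PiM UNIV (\<lambda>_. S))"
  shows "(\<integral>\<^sup>+\<omega>. ennreal \<bar>h (Fseq \<eta> l \<omega>) - h (Fseq (perturb \<eta> \<eta>' j) l \<omega>)\<bar> \<partial>M)
       = (\<integral>\<^sup>+\<omega>. ennreal \<bar>h (Fseq \<eta> (l - j) \<omega>) - h (Fseq (perturb \<eta> \<eta>' 0) (l - j) \<omega>)\<bar> \<partial>M)"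
proof -
  define G where "G z = ennreal \<bar>h (seq_tail z) - h (seq_tail_patch (l - j) z)\<bar>" for z
  have G: "G \<in> borel_measurable (PiM UNIV (\<lambda>_. S))"
    unfolding G_def
    using measurable_compose[OF measurable_seq_tail h] measurable_compose[OF measurable_seq_tail_patch h]
    by measurable
  have inj: "inj ((\<lambda>n. case n of 0 \<Rightarrow> Inr b | Suc k \<Rightarrow> Inl (a - int k)) :: nat \<Rightarrow> int + int)"
    for a b :: int
    by (auto simp: inj_def split: nat.splits)
  have "(\<integral>\<^sup>+\<omega>. ennreal \<bar>h (Fseq \<eta> a \<omega>) - h (Fseq (perturb \<eta> \<eta>' b) a \<omega>)\<bar> \<partial>M)
      = (\<integral>\<^sup>+z. G z \<partial>innovation_law)" if "a - b = l - j" for a b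
    using nn_integral_innovations_reindex[OF inj G] that
    unfolding Fseq_coupling_eq[where a=a and b=b] G_def by simp
  from this[of l j] this[of "l - j" 0] show ?thesis by simp
qed

lemma Fseq_perturb_future: "l < j \<Longrightarrow> Fseq (perturb \<eta> \<eta>' j) l \<omega> = Fseq \<eta> l \<omega>"
  by (auto simp: Fseq_def perturb_def)

end

section \<open>Expansion of the trace of W\<close>

definition trW_factors ::
    "(real \<Rightarrow> real \<Rightarrow> (nat \<Rightarrow> 's) \<Rightarrow> real^'p) \<Rightarrow> (int \<Rightarrow> 'w \<Rightarrow> 's) \<Rightarrow> nat \<Rightarrow> real
     \<Rightarrow> int \<Rightarrow> nat \<Rightarrow> int \<Rightarrow> 'p \<Rightarrow> 'p \<Rightarrow> 'w \<Rightarrow> real list" where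
  "trW_factors H \<zeta> n u i k l r j \<omega> =
     [eps H \<zeta> n u (i - int k) \<omega> $ r, eps H \<zeta> n u (l - int k) \<omega> $ r,
      eps H \<zeta> n u i \<omega> $ j, eps H \<zeta> n u l \<omega> $ j]"

lemma trW_eq_sum:
  "trW H \<zeta> n K \<tau> s Mn t u i \<omega> =
   (\<Sum>k\<in>{1..s}. \<Sum>l\<in>{max (i - int s) 1 .. i - int Mn - 1}. \<Sum>r\<in>UNIV. \<Sum>j\<in>UNIV.
      2 * K ((real_of_int l / real n - t) / \<tau>) / real s * prod_list (trW_factors H \<zeta> n u i k l r j \<omega>))"
proof -
  let ?E = "\<lambda>a r. eps H \<zeta> n u a \<omega> $ r"
  let ?L = "{max (i - int s) 1 .. i - int Mn - 1}"
  let ?K = "\<lambda>l. K ((real_of_int l / real n - t) / \<tau>)"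
  define F where "F r k l j = 2 * ?K l / real s * (?E (i - int k) r * ?E (l - int k) r * ?E i j * ?E l j)"
    for r k l j
  have psi: "psi H \<zeta> n K \<tau> s Mn t u i k \<omega> $ r $ j = (\<Sum>l\<in>?L. ?K l * (?E (l - int k) r * ?E l j))"
    for k r j
    by (simp add: psi_def phi_def outer_def)
  have "Wmat H \<zeta> n K \<tau> s Mn t u i \<omega> $ r $ r
      = 1 / real s * (\<Sum>k\<in>{1..s}. \<Sum>j\<in>UNIV. 2 * (?E (i - int k) r * ?E i j * psi H \<zeta> n K \<tau> s Mn t u i k \<omega> $ r $ j))"
    for r
    by (simp add: Wmat_def matrix_matrix_mult_def transpose_def phi_def outer_def
        sum.distrib[symmetric] sum_distrib_left algebra_simps)
  also have "\<dots> r = (\<Sum>k\<in>{1..s}. \<Sum>j\<in>UNIV. \<Sum>l\<in>?L. F r k l j)" for r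
    unfolding psi F_def by (simp add: sum_distrib_left sum_distrib_right algebra_simps)
  also have "\<dots> r = (\<Sum>k\<in>{1..s}. \<Sum>l\<in>?L. \<Sum>j\<in>UNIV. F r k l j)" for r
    by (intro sum.cong refl sum.swap)
  finally have "trW H \<zeta> n K \<tau> s Mn t u i \<omega> = (\<Sum>r\<in>UNIV. \<Sum>k\<in>{1..s}. \<Sum>l\<in>?L. \<Sum>j\<in>UNIV. F r k l j)"
    unfolding trW_def by simp
  also have "\<dots> = (\<Sum>k\<in>{1..s}. \<Sum>l\<in>?L. \<Sum>r\<in>UNIV. \<Sum>j\<in>UNIV. F r k l j)"
    by (subst sum.swap) (intro sum.cong refl sum.swap)
  finally show ?thesis
    by (simp add: F_def trW_factors_def mult_ac)
qed

definition telescope4 :: "nat \<Rightarrow> real list \<Rightarrow> real list \<Rightarrow> real" where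
  "telescope4 q x y =
     (if q = 0 then (x!0 - y!0) * x!1 * x!2 * x!3
      else if q = 1 then (x!1 - y!1) * y!0 * x!2 * x!3
      else if q = 2 then (x!2 - y!2) * y!0 * y!1 * x!3
      else (x!3 - y!3) * y!0 * y!1 * y!2)"

lemma sum_telescope4:
  "(\<Sum>q<4. telescope4 q x y) = x!0 * x!1 * x!2 * x!3 - y!0 * y!1 * y!2 * y!3"
  by (simp add: telescope4_def eval_nat_numeral algebra_simps)

lemma sum_nested_product:
  "(\<Sum>((k, l), (r, j), q) \<in> (A \<times> B) \<times> (C \<times> D) \<times> E. G k l r j q)
     = (\<Sum>k\<in>A. \<Sum>l\<in>B. \<Sum>r\<in>C. \<Sum>j\<in>D. \<Sum>q\<in>E. G k l r j q)"
  by (simp only: sum.cartesian_product' prod.case)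

lemma trW_perturb_diff_eq:
  "trW H \<eta> n K \<tau> s Mn t u i \<omega> - trW H (perturb \<eta> \<eta>' j0) n K \<tau> s Mn t u i \<omega> =
   (\<Sum>((k, l), (r, j), q) \<in> ({1..s} \<times> {max (i - int s) 1 .. i - int Mn - 1}) \<times> (UNIV \<times> UNIV) \<times> {..<4}.
      2 * K ((real_of_int l / real n - t) / \<tau>) / real s *
      telescope4 q (trW_factors H \<eta> n u i k l r j \<omega>) (trW_factors H (perturb \<eta> \<eta>' j0) n u i k l r j \<omega>))"
proof -
  have telescope: "(\<Sum>q<4. a * telescope4 q x y) = a * (x!0 * x!1 * x!2 * x!3) - a * (y!0 * y!1 * y!2 * y!3)"
    for a x y
    by (simp add: sum_telescope4 right_diff_distrib flip: sum_distrib_left)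
  show ?thesis
    unfolding sum_nested_product trW_eq_sum telescope
    by (simp add: trW_factors_def sum_subtractf mult.assoc)
qed

section \<open>Coupling bounds\<close>

lemma borel_measurable_vec_nth:
  fixes h :: "'a \<Rightarrow> real^'p"
  assumes "h \<in> borel_measurable N"
  shows "(\<lambda>x. h x $ r) \<in> borel_measurable N"
  by (rule measurable_compose[OF assms borel_measurable_continuous_onI]) (intro continuous_intros)

locale coupled_filter = iid_innovations M S \<eta> \<eta>'
  for M :: "'w measure" and S :: "'s measure" and \<eta> \<eta>' :: "int \<Rightarrow> 'w \<Rightarrow> 's" +
  fixes H :: "real \<Rightarrow> real \<Rightarrow> (nat \<Rightarrow> 's) \<Rightarrow> real^'p::finite" and C_chi chi t0 c0 :: real
  assumes H_measurable: "\<forall>t u. H t u \<in> borel_measurable (PiM UNIV (\<lambda>_. S))"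
    and coupling_decay: "\<forall>i::nat. \<forall>t. \<forall>u\<in>{0..1}. \<forall>j.
        Lnorm M 1 (\<lambda>\<omega>. H t u (Fseq \<eta> (int i) \<omega>) $ j
                      - H t u (Fseq (perturb \<eta> \<eta>' 0) (int i) \<omega>) $ j) \<le> ennreal (C_chi * chi ^ i)"
    and chi: "0 < chi" "chi < 1"
    and t0: "t0 > 0"
    and exp_moment: "\<forall>t. \<forall>u\<in>{0..1}. \<forall>j.
        (\<integral>\<^sup>+\<omega>. ennreal (exp (t0 * \<bar>H t u (Fseq \<eta> 0 \<omega>) $ j\<bar>)) \<partial>M) < ennreal c0"
begin

text \<open>Moments up to order \<open>18 = 6 \<cdot> 3\<close> are needed: the \<open>p\<close>-th moment of a product
  of three errors is controlled by their \<open>6p\<close>-th moments, and \<open>p \<le> 3\<close>.\<close>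

definition moment_bound :: real where
  "moment_bound = 1 + fact 18 / t0 ^ 18 * c0"

lemma c0_pos: "c0 > 0"
proof -
  have "(\<integral>\<^sup>+\<omega>. ennreal (exp (t0 * \<bar>H 0 0 (Fseq \<eta> 0 \<omega>) $ undefined\<bar>)) \<partial>M) < ennreal c0"
    using exp_moment by auto
  then have "0 < ennreal c0"
    by (rule le_less_trans[OF zero_le])
  then show ?thesis by simp
qed

lemma moment_bound_pos: "moment_bound > 0"
  using c0_pos t0 by (simp add: moment_bound_def add_pos_nonneg)

lemma measurable_H_component: "(\<lambda>x. H t u x $ r) \<in> borel_measurable (PiM UNIV (\<lambda>_. S))"
  using H_measurable by (intro borel_measurable_vec_nth) auto

lemma measurable_H_Fseq:
  "(\<lambda>\<omega>. H t u (Fseq \<eta> a \<omega>) $ r) \<in> borel_measurable M"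
  "(\<lambda>\<omega>. H t u (Fseq (perturb \<eta> \<eta>' j) a \<omega>) $ r) \<in> borel_measurable M"
  using measurable_compose[OF measurable_Fseq measurable_H_component]
    measurable_compose[OF measurable_Fseq_perturb measurable_H_component] by auto

lemma nn_integral_power_H_Fseq0_le:
  assumes u: "u \<in> {0..1}" and k: "k \<le> 18"
  shows "(\<integral>\<^sup>+\<omega>. ennreal (\<bar>H t u (Fseq \<eta> 0 \<omega>) $ r\<bar> ^ k) \<partial>M) \<le> ennreal moment_bound"
proof -
  let ?X = "\<lambda>\<omega>. \<bar>H t u (Fseq \<eta> 0 \<omega>) $ r\<bar>" and ?c = "fact 18 / t0 ^ 18 :: real"
  have "(\<integral>\<^sup>+\<omega>. ennreal (?X \<omega> ^ k) \<partial>M) \<le> (\<integral>\<^sup>+\<omega>. 1 + ennreal ?c * ennreal (exp (t0 * ?X \<omega>)) \<partial>M)"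
  proof (rule nn_integral_mono)
    fix \<omega>
    have "ennreal (?X \<omega> ^ k) \<le> ennreal (1 + ?c * exp (t0 * ?X \<omega>))"
      using power_abs_le_exp[OF t0 k] by (intro ennreal_leI) simp
    also have "\<dots> = ennreal 1 + ennreal (?c * exp (t0 * ?X \<omega>))"
      by (rule ennreal_plus) (use t0 in auto)
    also have "\<dots> = 1 + ennreal ?c * ennreal (exp (t0 * ?X \<omega>))"
      by (subst ennreal_mult) (use t0 in auto)
    finally show "ennreal (?X \<omega> ^ k) \<le> 1 + ennreal ?c * ennreal (exp (t0 * ?X \<omega>))" .
  qed
  also have "\<dots> = 1 + ennreal ?c * (\<integral>\<^sup>+\<omega>. ennreal (exp (t0 * ?X \<omega>)) \<partial>M)"
    using measurable_H_Fseq(1)[of t u 0 r] by (simp add: nn_integral_add nn_integral_cmult emeasure_space_1)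
  also have "\<dots> \<le> 1 + ennreal ?c * ennreal c0"
    using exp_moment u by (intro add_mono mult_left_mono) (auto intro: less_imp_le)
  also have "\<dots> = ennreal moment_bound"
    using t0 c0_pos by (simp add: moment_bound_def ennreal_mult[symmetric] flip: ennreal_1)
  finally show ?thesis .
qed

lemma nn_integral_power_H_le:
  assumes u: "u \<in> {0..1}" and k: "k \<le> 18"
  shows "(\<integral>\<^sup>+\<omega>. ennreal (\<bar>H t u (Fseq \<eta> a \<omega>) $ r\<bar> ^ k) \<partial>M) \<le> ennreal moment_bound"
    and "(\<integral>\<^sup>+\<omega>. ennreal (\<bar>H t u (Fseq (perturb \<eta> \<eta>' j) a \<omega>) $ r\<bar> ^ k) \<partial>M) \<le> ennreal moment_bound"
proof -
  have g: "(\<lambda>x. ennreal (\<bar>H t u x $ r\<bar> ^ k)) \<in> borel_measurable (PiM UNIV (\<lambda>_. S))"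
    using measurable_H_component by measurable
  show "(\<integral>\<^sup>+\<omega>. ennreal (\<bar>H t u (Fseq \<eta> a \<omega>) $ r\<bar> ^ k) \<partial>M) \<le> ennreal moment_bound"
    using nn_integral_power_H_Fseq0_le[OF u k, of t r]
    unfolding nn_integral_Fseq[OF g, of a] nn_integral_Fseq[OF g, of 0] .
  show "(\<integral>\<^sup>+\<omega>. ennreal (\<bar>H t u (Fseq (perturb \<eta> \<eta>' j) a \<omega>) $ r\<bar> ^ k) \<partial>M) \<le> ennreal moment_bound"
    using nn_integral_power_H_Fseq0_le[OF u k, of t r]
    unfolding nn_integral_Fseq_perturb[OF g, of j a] nn_integral_Fseq[OF g, of 0] .
qed

lemma nn_integral_H_coupling_le:
  assumes u: "u \<in> {0..1}"
  shows "(\<integral>\<^sup>+\<omega>. ennreal \<bar>H t u (Fseq \<eta> a \<omega>) $ r - H t u (Fseq (perturb \<eta> \<eta>' j) a \<omega>) $ r\<bar> \<partial>M)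
     \<le> ennreal (\<bar>C_chi\<bar> * chi ^ nat \<bar>a - j\<bar>)"
proof (cases "a < j")
  case True
  then show ?thesis using Fseq_perturb_future[OF True] by simp
next
  case False
  have "(\<integral>\<^sup>+\<omega>. ennreal \<bar>H t u (Fseq \<eta> a \<omega>) $ r - H t u (Fseq (perturb \<eta> \<eta>' j) a \<omega>) $ r\<bar> \<partial>M)
      = (\<integral>\<^sup>+\<omega>. ennreal \<bar>H t u (Fseq \<eta> (a - j) \<omega>) $ r - H t u (Fseq (perturb \<eta> \<eta>' 0) (a - j) \<omega>) $ r\<bar> \<partial>M)"
    by (rule nn_integral_perturb_shift[OF measurable_H_component])
  also have "a - j = int (nat \<bar>a - j\<bar>)"
    using False by simp
  also have "(\<integral>\<^sup>+\<omega>. ennreal \<bar>H t u (Fseq \<eta> (int (nat \<bar>a - j\<bar>)) \<omega>) $ r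
                       - H t u (Fseq (perturb \<eta> \<eta>' 0) (int (nat \<bar>a - j\<bar>)) \<omega>) $ r\<bar> \<partial>M)
      \<le> ennreal (C_chi * chi ^ nat \<bar>a - j\<bar>)"
    using coupling_decay u unfolding Lnorm_1 by blast
  also have "\<dots> \<le> ennreal (\<bar>C_chi\<bar> * chi ^ nat \<bar>a - j\<bar>)"
    using chi by (intro ennreal_leI mult_right_mono) auto
  finally show ?thesis .
qed

text \<open>Two Cauchy--Schwarz steps turn the \<open>L\<^sup>1\<close> coupling bound \<open>chi ^ m\<close> of one factor
  into \<open>(chi ^ m) powr (1/4) = \<rho> ^ (3 * m)\<close>, which dominates \<open>(\<rho> ^ m) ^ p\<close> for \<open>p \<le> 3\<close>.\<close>

definition \<rho> :: real where
  "\<rho> = root 12 chi"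

lemma rho: "0 < \<rho>" "\<rho> < 1" "\<rho> ^ 12 = chi"
  using chi by (auto simp: \<rho>_def real_root_gt_zero)

definition coupling_constant :: real where
  "coupling_constant = sqrt (sqrt (\<bar>C_chi\<bar> * (2^12 * moment_bound)) * (3 * moment_bound)) + 1"

lemma coupling_constant_ge_1: "coupling_constant \<ge> 1"
  using moment_bound_pos by (simp add: coupling_constant_def)

lemma coupling_constant_bound:
  assumes p: "1 \<le> p" "p \<le> 3"
  shows "sqrt (sqrt (\<bar>C_chi\<bar> * chi ^ m * (2^12 * moment_bound)) * (3 * moment_bound))
    \<le> (coupling_constant * \<rho> ^ m) ^ p"
proof -
  let ?A = "sqrt (sqrt (\<bar>C_chi\<bar> * (2^12 * moment_bound)) * (3 * moment_bound))"
  have "chi ^ m = (\<rho> ^ 12) ^ m"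
    using rho by simp
  also have "\<dots> = (((\<rho> ^ m) ^ 3) ^ 2) ^ 2"
    by (simp add: power_mult[symmetric] mult.commute)
  finally have "chi ^ m = (((\<rho> ^ m) ^ 3) ^ 2) ^ 2" .
  then have "sqrt (sqrt (chi ^ m)) = (\<rho> ^ m) ^ 3"
    using rho by (simp only: real_sqrt_abs abs_of_nonneg zero_le_power less_imp_le)
  then have "sqrt (sqrt (\<bar>C_chi\<bar> * chi ^ m * (2^12 * moment_bound)) * (3 * moment_bound)) = ?A * (\<rho> ^ m) ^ 3"
    by (simp add: real_sqrt_mult mult_ac)
  also have "\<dots> \<le> coupling_constant ^ p * (\<rho> ^ m) ^ p"
  proof (rule mult_mono)
    have "?A \<le> coupling_constant"
      by (simp add: coupling_constant_def)
    also have "\<dots> \<le> coupling_constant ^ p"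
      using coupling_constant_ge_1 p by (metis power_one_right power_increasing)
    finally show "?A \<le> coupling_constant ^ p" .
    show "(\<rho> ^ m) ^ 3 \<le> (\<rho> ^ m) ^ p"
      using rho p by (intro power_decreasing) (auto simp: power_le_one)
  qed (use rho coupling_constant_ge_1 in auto)
  finally show ?thesis
    by (simp add: power_mult_distrib)
qed

definition coupled_errors :: "nat \<Rightarrow> real \<Rightarrow> int \<Rightarrow> ('w \<Rightarrow> real) set" where
  "coupled_errors n u j0 = {\<lambda>\<omega>. eps H \<zeta> n u a \<omega> $ r | \<zeta> a r. \<zeta> = \<eta> \<or> \<zeta> = perturb \<eta> \<eta>' j0}"

lemma eps_in_coupled_errors [simp]:
  "(\<lambda>\<omega>. eps H \<eta> n u a \<omega> $ r) \<in> coupled_errors n u j0"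
  "(\<lambda>\<omega>. eps H (perturb \<eta> \<eta>' j0) n u a \<omega> $ r) \<in> coupled_errors n u j0"
  unfolding coupled_errors_def by blast+

lemma measurable_coupled_errors: "v \<in> coupled_errors n u j0 \<Longrightarrow> v \<in> borel_measurable M"
  unfolding coupled_errors_def eps_def using measurable_H_Fseq by auto

lemma nn_integral_power_coupled_errors_le:
  "v \<in> coupled_errors n u j0 \<Longrightarrow> u \<in> {0..1} \<Longrightarrow> k \<le> 18 \<Longrightarrow>
    (\<integral>\<^sup>+\<omega>. ennreal (\<bar>v \<omega>\<bar> ^ k) \<partial>M) \<le> ennreal moment_bound"
  unfolding coupled_errors_def eps_def using nn_integral_power_H_le by auto

lemma nn_integral_coupled_product_le:
  assumes u: "u \<in> {0..1}" and p: "1 \<le> p" "p \<le> 3"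
    and yzw: "y \<in> coupled_errors n u j0" "z \<in> coupled_errors n u j0" "w \<in> coupled_errors n u j0"
  shows "(\<integral>\<^sup>+\<omega>. ennreal (\<bar>(eps H \<eta> n u a \<omega> $ r - eps H (perturb \<eta> \<eta>' j0) n u a \<omega> $ r)
                          * y \<omega> * z \<omega> * w \<omega>\<bar> ^ p) \<partial>M)
    \<le> ennreal ((coupling_constant * \<rho> ^ nat \<bar>a - j0\<bar>) ^ p)"
proof -
  let ?m = "nat \<bar>a - j0\<bar>" and ?Mb = moment_bound
  have "(\<integral>\<^sup>+\<omega>. ennreal (\<bar>(eps H \<eta> n u a \<omega> $ r - eps H (perturb \<eta> \<eta>' j0) n u a \<omega> $ r)
                          * y \<omega> * z \<omega> * w \<omega>\<bar> ^ p) \<partial>M)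
     \<le> ennreal (sqrt (sqrt (\<bar>C_chi\<bar> * chi ^ ?m * (2^12 * ?Mb)) * (3 * ?Mb)))"
  proof (rule nn_integral_power_diff_product_le)
    show "(\<integral>\<^sup>+\<omega>. ennreal \<bar>eps H \<eta> n u a \<omega> $ r - eps H (perturb \<eta> \<eta>' j0) n u a \<omega> $ r\<bar> \<partial>M)
        \<le> ennreal (\<bar>C_chi\<bar> * chi ^ ?m)"
      unfolding eps_def by (rule nn_integral_H_coupling_le[OF u])
    fix v k assume "v \<in> {\<lambda>\<omega>. eps H \<eta> n u a \<omega> $ r, \<lambda>\<omega>. eps H (perturb \<eta> \<eta>' j0) n u a \<omega> $ r, y, z, w}"
      "k \<le> (18::nat)"
    then have "v \<in> coupled_errors n u j0"
      using yzw by auto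
    then show "(\<integral>\<^sup>+\<omega>. ennreal (\<bar>v \<omega>\<bar> ^ k) \<partial>M) \<le> ennreal ?Mb"
      using u \<open>k \<le> 18\<close> by (rule nn_integral_power_coupled_errors_le)
  next
    show "0 \<le> \<bar>C_chi\<bar> * chi ^ ?m" "0 \<le> ?Mb" "1 \<le> p" "p \<le> 3"
      using chi moment_bound_pos p by auto
  qed (use yzw measurable_coupled_errors[OF eps_in_coupled_errors(1)]
      measurable_coupled_errors[OF eps_in_coupled_errors(2)] in \<open>auto intro: measurable_coupled_errors\<close>)
  also have "\<dots> \<le> ennreal ((coupling_constant * \<rho> ^ ?m) ^ p)"
    using p by (intro ennreal_leI coupling_constant_bound)
  finally show ?thesis .
qed

lemma nn_integral_telescope4_le:
  assumes u: "u \<in> {0..1}" and p: "1 \<le> p" "p \<le> 3" and q: "q < 4"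
  shows "(\<integral>\<^sup>+\<omega>. ennreal (\<bar>telescope4 q (trW_factors H \<eta> n u i k l r j \<omega>)
                          (trW_factors H (perturb \<eta> \<eta>' j0) n u i k l r j \<omega>)\<bar> ^ p) \<partial>M)
    \<le> ennreal ((coupling_constant * \<rho> ^ nat \<bar>[i - int k, l - int k, i, l] ! q - j0\<bar>) ^ p)"
proof -
  consider "q = 0" | "q = 1" | "q = 2" | "q = 3"
    using q by linarith
  then show ?thesis
    by cases (simp_all add: telescope4_def trW_factors_def nn_integral_coupled_product_le[OF u p])
qed

lemma measurable_telescope4_trW_factors:
  "(\<lambda>\<omega>. telescope4 q (trW_factors H \<eta> n u i k l r j \<omega>) (trW_factors H (perturb \<eta> \<eta>' j0) n u i k l r j \<omega>))
     \<in> borel_measurable M"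
proof -
  have [measurable]: "(\<lambda>\<omega>. eps H \<eta> n u a \<omega> $ r) \<in> borel_measurable M"
    "(\<lambda>\<omega>. eps H (perturb \<eta> \<eta>' j0) n u a \<omega> $ r) \<in> borel_measurable M" for a r
    using measurable_coupled_errors eps_in_coupled_errors by blast+
  show ?thesis
    unfolding telescope4_def trW_factors_def
    by (cases "q = 0"; cases "q = 1"; cases "q = 2") (simp_all, measurable)
qed

lemma nn_integral_scaled_telescope4_le:
  assumes u: "u \<in> {0..1}" and p: "1 \<le> p" "p \<le> 3" and q: "q < 4" and c: "\<bar>c\<bar> \<le> C"
  shows "(\<integral>\<^sup>+\<omega>. ennreal (\<bar>c * telescope4 q (trW_factors H \<eta> n u i k l r j \<omega>)
                              (trW_factors H (perturb \<eta> \<eta>' j0) n u i k l r j \<omega>)\<bar> ^ p) \<partial>M)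
    \<le> ennreal ((C * coupling_constant * \<rho> ^ nat \<bar>[i - int k, l - int k, i, l] ! q - j0\<bar>) ^ p)"
proof -
  let ?b = "coupling_constant * \<rho> ^ nat \<bar>[i - int k, l - int k, i, l] ! q - j0\<bar>"
  have "ennreal (\<bar>c\<bar> ^ p) \<le> ennreal (C ^ p)"
    using c by (intro ennreal_leI power_mono) auto
  then have "(\<integral>\<^sup>+\<omega>. ennreal (\<bar>c * telescope4 q (trW_factors H \<eta> n u i k l r j \<omega>)
                              (trW_factors H (perturb \<eta> \<eta>' j0) n u i k l r j \<omega>)\<bar> ^ p) \<partial>M)
      \<le> ennreal (C ^ p) * ennreal (?b ^ p)"
    using nn_integral_telescope4_le[OF u p q] measurable_telescope4_trW_factors
    by (simp add: abs_mult power_mult_distrib ennreal_mult nn_integral_cmult mult_mono)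
  also have "\<dots> = ennreal ((C * ?b) ^ p)"
    using c coupling_constant_ge_1 rho by (simp add: power_mult_distrib flip: ennreal_mult)
  finally show ?thesis
    by (simp add: mult.assoc)
qed

lemma Lnorm_trW_perturb_le:
  fixes K :: "real \<Rightarrow> real"
  assumes u: "u \<in> {0..1}" and K: "\<forall>x. \<bar>K x\<bar> \<le> B" and B: "B > 0"
    and p: "1 \<le> p" "p \<le> 3" and s: "s > 0"
  shows "Lnorm M (real p)
      (\<lambda>\<omega>. trW H \<eta> n K \<tau> s Mn t u i \<omega> - trW H (perturb \<eta> \<eta>' j0) n K \<tau> s Mn t u i \<omega>)
    \<le> ennreal (\<Sum>((k, l), (r, j), q) \<in> ({1..s} \<times> {max (i - int s) 1 .. i - int Mn - 1})
                                        \<times> (UNIV \<times> UNIV :: ('p \<times> 'p) set) \<times> {..<4}.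
         2 * B / real s * coupling_constant * \<rho> ^ nat \<bar>[i - int k, l - int k, i, l] ! q - j0\<bar>)"
proof -
  let ?I = "({1..s} \<times> {max (i - int s) 1 .. i - int Mn - 1}) \<times> (UNIV \<times> UNIV :: ('p \<times> 'p) set) \<times> {..<4::nat}"
  define c where "c l = 2 * K ((real_of_int l / real n - t) / \<tau>) / real s" for l :: int
  define F where "F = (\<lambda>((k, l), (r, j), q) \<omega>. c l *
      telescope4 q (trW_factors H \<eta> n u i k l r j \<omega>) (trW_factors H (perturb \<eta> \<eta>' j0) n u i k l r j \<omega>))"
  define b where "b = (\<lambda>((k, l), (r::'p, j::'p), q).
      2 * B / real s * coupling_constant * \<rho> ^ nat \<bar>[i - int k, l - int k, i, l] ! q - j0\<bar>)"
  have b_pos: "b x > 0" for x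
    using B s coupling_constant_ge_1 rho by (auto simp: b_def split: prod.split)
  have "(\<integral>\<^sup>+\<omega>. ennreal (\<bar>F x \<omega>\<bar> ^ p) \<partial>M) \<le> ennreal (b x ^ p)" if "x \<in> ?I" for x
  proof -
    obtain k l r j q where x: "x = ((k, l), (r, j), q)" and q: "q < 4"
      using \<open>x \<in> ?I\<close> by auto
    have "\<bar>c l\<bar> \<le> 2 * B / real s"
      using K s by (simp add: c_def abs_mult divide_right_mono)
    then show ?thesis
      unfolding x F_def b_def prod.case by (rule nn_integral_scaled_telescope4_le[OF u p q])
  qed
  then have "(\<integral>\<^sup>+\<omega>. ennreal (\<bar>\<Sum>x\<in>?I. F x \<omega>\<bar> ^ p) \<partial>M) \<le> ennreal ((\<Sum>x\<in>?I. b x) ^ p)"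
    using b_pos p measurable_telescope4_trW_factors
    by (intro nn_integral_power_abs_sum_le) (auto simp: F_def c_def split: prod.split)
  moreover have "(\<Sum>x\<in>?I. F x \<omega>) =
      trW H \<eta> n K \<tau> s Mn t u i \<omega> - trW H (perturb \<eta> \<eta>' j0) n K \<tau> s Mn t u i \<omega>" for \<omega>
    unfolding trW_perturb_diff_eq F_def c_def by (intro sum.cong) auto
  ultimately have "(\<integral>\<^sup>+\<omega>. ennreal (\<bar>trW H \<eta> n K \<tau> s Mn t u i \<omega> - trW H (perturb \<eta> \<eta>' j0) n K \<tau> s Mn t u i \<omega>\<bar> ^ p) \<partial>M)
      \<le> ennreal ((\<Sum>x\<in>?I. b x) ^ p)"
    by simp
  then have "Lnorm M (real p) (\<lambda>\<omega>. trW H \<eta> n K \<tau> s Mn t u i \<omega> - trW H (perturb \<eta> \<eta>' j0) n K \<tau> s Mn t u i \<omega>)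
      \<le> ennreal (sum b ?I)"
    by (rule Lnorm_le_of_nn_integral_power_le[OF p(1) sum_nonneg[OF less_imp_le[OF b_pos]]])
  then show ?thesis
    unfolding b_def .
qed

end

section \<open>Two-sided geometric sums\<close>

text \<open>\<open>abs_power_primitive r z = (\<Sum>w<z. r ^ nat \<bar>w\<bar>)\<close>, the sum running over all
  integers \<open>w < z\<close>.\<close>

definition abs_power_primitive :: "real \<Rightarrow> int \<Rightarrow> real" where
  "abs_power_primitive r z =
     (if z \<le> 0 then r ^ nat (1 - z) / (1 - r) else (1 + r - r ^ nat z) / (1 - r))"

lemma abs_power_primitive_step:
  fixes r :: real
  assumes r: "0 < r" "r < 1"
  shows "abs_power_primitive r (z + 1) - abs_power_primitive r z = r ^ nat \<bar>z\<bar>"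
proof -
  have cancel: "(x - r * x) / (1 - r) = x" for x
  proof -
    have "x - r * x = x * (1 - r)"
      by (simp add: algebra_simps)
    then show ?thesis
      using r by simp
  qed
  consider "z < 0" | "z = 0" | "z > 0"
    by linarith
  then show ?thesis
  proof cases
    case 1
    then have "nat (1 - z) = Suc (nat \<bar>z\<bar>)" "nat (1 - (z + 1)) = nat \<bar>z\<bar>"
      by auto
    with 1 have "abs_power_primitive r (z + 1) - abs_power_primitive r z
        = (r ^ nat \<bar>z\<bar> - r * r ^ nat \<bar>z\<bar>) / (1 - r)"
      by (simp add: abs_power_primitive_def diff_divide_distrib)
    then show ?thesis
      by (simp only: cancel)
  next
    case 2
    with r show ?thesis
      by (simp add: abs_power_primitive_def flip: diff_divide_distrib)
  next
    case 3
    then obtain k where k: "z = int k" "k > 0"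
      by (metis zero_less_imp_eq_int)
    then have "abs_power_primitive r (z + 1) - abs_power_primitive r z
        = (1 + r - r * r ^ k) / (1 - r) - (1 + r - r ^ k) / (1 - r)"
      by (simp add: abs_power_primitive_def nat_add_distrib)
    also have "\<dots> = ((1 + r - r * r ^ k) - (1 + r - r ^ k)) / (1 - r)"
      by (rule diff_divide_distrib[symmetric])
    also have "\<dots> = (r ^ k - r * r ^ k) / (1 - r)"
      by (simp add: algebra_simps)
    finally show ?thesis
      using k by (simp only: cancel nat_int abs_of_nat)
  qed
qed

lemma abs_power_primitive_bounds:
  fixes r :: real
  assumes r: "0 < r" "r < 1"
  shows "0 \<le> abs_power_primitive r z" "abs_power_primitive r z \<le> 2 / (1 - r)"
proof -
  have pow: "0 \<le> r ^ n" "r ^ n \<le> 1" for n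
    using r by (auto simp: power_le_one)
  have "r - r ^ n \<le> 1" for n
    using pow(1)[of n] r by linarith
  show "0 \<le> abs_power_primitive r z"
    using pow[of "nat z"] pow[of "nat (1 - z)"] r by (simp add: abs_power_primitive_def)
  show "abs_power_primitive r z \<le> 2 / (1 - r)"
    using pow[of "nat z"] pow[of "nat (1 - z)"] \<open>r - r ^ nat z \<le> 1\<close> r
    by (auto simp: abs_power_primitive_def intro!: divide_right_mono)
qed

lemma sum_power_abs_le:
  fixes r :: real
  assumes r: "0 < r" "r < 1"
  shows "(\<Sum>l<N. r ^ nat \<bar>int l + y\<bar>) \<le> 2 / (1 - r)"
proof -
  have "(\<Sum>l<N. r ^ nat \<bar>int l + y\<bar>) = abs_power_primitive r (int N + y) - abs_power_primitive r y"
    by (induction N) (simp_all add: abs_power_primitive_step[OF r, symmetric] algebra_simps)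
  then show ?thesis using abs_power_primitive_bounds[OF r] by (smt (verit))
qed

lemma real_mult_power_le:
  fixes r :: real
  assumes r: "0 < r" "r < 1"
  shows "real j * r ^ j \<le> 1 / (1 - r)"
proof -
  have "real j * r ^ j = (\<Sum>i<j. r ^ j)" by simp
  also have "\<dots> \<le> (\<Sum>i<j. r ^ i)" using r by (intro sum_mono power_decreasing) auto
  also have "\<dots> = (1 - r ^ j) / (1 - r)" using r by (simp add: sum_gp_strict)
  also have "\<dots> \<le> 1 / (1 - r)" using r by (simp add: divide_right_mono)
  finally show ?thesis .
qed

lemma real_mult_power_le_sqrt:
  fixes r :: real
  assumes r: "0 < r" "r < 1"
  shows "real j * r ^ j \<le> sqrt r ^ j / (1 - sqrt r)"
proof -
  have "real j * r ^ j = (real j * sqrt r ^ j) * sqrt r ^ j"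
    using r by (simp flip: power_mult_distrib)
  also have "\<dots> \<le> 1 / (1 - sqrt r) * sqrt r ^ j"
    using r by (intro mult_right_mono real_mult_power_le) auto
  finally show ?thesis by simp
qed

lemma sum_power_le:
  fixes r :: real
  assumes r: "0 < r" "r < 1"
  shows "(\<Sum>l<N. r ^ l) \<le> 1 / (1 - r)"
proof -
  have "(\<Sum>l<N. r ^ l) = (1 - r ^ N) / (1 - r)" using r by (simp add: sum_gp_strict)
  also have "\<dots> \<le> 1 / (1 - r)" using r by (simp add: divide_right_mono)
  finally show ?thesis .
qed

lemma sum_mult_power_le:
  fixes r :: real
  assumes r: "0 < r" "r < 1"
  shows "(\<Sum>l<N. real l * r ^ l) \<le> 1 / (1 - sqrt r) ^ 2"
proof -
  have "(\<Sum>l<N. real l * r ^ l) \<le> (\<Sum>l<N. sqrt r ^ l) / (1 - sqrt r)"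
    unfolding sum_divide_distrib by (intro sum_mono real_mult_power_le_sqrt[OF r])
  also have "\<dots> \<le> 1 / (1 - sqrt r) / (1 - sqrt r)"
    using r by (intro divide_right_mono sum_power_le) auto
  finally show ?thesis by (simp add: power2_eq_square)
qed

lemma sum_abs_mult_power_abs_le:
  fixes r :: real
  assumes r: "0 < r" "r < 1"
  shows "(\<Sum>l<N. \<bar>int l + y\<bar> * r ^ nat \<bar>int l + y\<bar>) \<le> 2 / (1 - sqrt r) ^ 2"
proof -
  have "(\<Sum>l<N. \<bar>int l + y\<bar> * r ^ nat \<bar>int l + y\<bar>) \<le> (\<Sum>l<N. sqrt r ^ nat \<bar>int l + y\<bar>) / (1 - sqrt r)"
    unfolding sum_divide_distrib
    using real_mult_power_le_sqrt[OF r, of "nat \<bar>int _ + y\<bar>"] by (intro sum_mono) simp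
  also have "\<dots> \<le> 2 / (1 - sqrt r) / (1 - sqrt r)"
    using r by (intro divide_right_mono sum_power_abs_le) auto
  finally show ?thesis by (simp add: power2_eq_square)
qed

lemma sum_power_lag_le:
  fixes r :: real
  assumes r: "0 < r" "r < 1"
  shows "(\<Sum>l<N. r ^ nat \<bar>int (l + m) - int d\<bar>) \<le> 2 / (1 - r)"
  using sum_power_abs_le[OF r, where N=N and y="int m - int d"] by (simp add: algebra_simps)

lemma sum_mult_power_lag_le:
  fixes r :: real
  assumes r: "0 < r" "r < 1"
  shows "(\<Sum>l<N. real (l + m) * r ^ nat \<bar>int (l + m) - int d\<bar>) \<le> real d * (2 / (1 - r)) + 2 / (1 - sqrt r) ^ 2"
proof -
  let ?e = "\<lambda>l. int l + (int m - int d)"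
  have "(\<Sum>l<N. real (l + m) * r ^ nat \<bar>int (l + m) - int d\<bar>)
     \<le> (\<Sum>l<N. real d * r ^ nat \<bar>int (l + m) - int d\<bar> + \<bar>?e l\<bar> * r ^ nat \<bar>?e l\<bar>)"
  proof (rule sum_mono)
    fix l
    have "real (l + m) \<le> real d + \<bar>?e l\<bar>" by linarith
    moreover have "int (l + m) - int d = ?e l"
      by simp
    ultimately have "real (l + m) * r ^ nat \<bar>int (l + m) - int d\<bar> \<le> (real d + \<bar>?e l\<bar>) * r ^ nat \<bar>?e l\<bar>"
      using r by (metis mult_right_mono zero_le_power less_imp_le)
    then show "real (l + m) * r ^ nat \<bar>int (l + m) - int d\<bar>
        \<le> real d * r ^ nat \<bar>int (l + m) - int d\<bar> + \<bar>?e l\<bar> * r ^ nat \<bar>?e l\<bar>"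
      by (simp add: algebra_simps)
  qed
  also have "\<dots> = real d * (\<Sum>l<N. r ^ nat \<bar>int (l + m) - int d\<bar>) + (\<Sum>l<N. \<bar>?e l\<bar> * r ^ nat \<bar>?e l\<bar>)"
    by (simp add: sum.distrib sum_distrib_left)
  also have "\<dots> \<le> real d * (2 / (1 - r)) + 2 / (1 - sqrt r) ^ 2"
    by (intro add_mono mult_left_mono sum_power_lag_le[OF r] sum_abs_mult_power_abs_le[OF r]) auto
  finally show ?thesis .
qed

lemma power_lag_le_far:
  fixes r :: real
  assumes r: "0 < r" "r < 1" and d: "2 * d \<le> m"
  shows "r ^ nat \<bar>int (l + m) - int d\<bar> \<le> r ^ l * sqrt r ^ m"
proof -
  have "nat \<bar>int (l + m) - int d\<bar> = l + (m - d)"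
    using d by auto
  then have "r ^ nat \<bar>int (l + m) - int d\<bar> = r ^ l * sqrt r ^ (2 * (m - d))"
    using r by (simp add: power_add power_mult)
  also have "\<dots> \<le> r ^ l * sqrt r ^ m"
    using r d by (intro mult_left_mono power_decreasing) auto
  finally show ?thesis .
qed

lemma sum_power_lag_far_le:
  fixes r :: real
  assumes r: "0 < r" "r < 1" and d: "2 * d \<le> m"
  shows "(\<Sum>l<N. r ^ nat \<bar>int (l + m) - int d\<bar>) \<le> sqrt r ^ m / (1 - r)"
proof -
  have "(\<Sum>l<N. r ^ nat \<bar>int (l + m) - int d\<bar>) \<le> (\<Sum>l<N. r ^ l) * sqrt r ^ m"
    unfolding sum_distrib_right by (intro sum_mono power_lag_le_far[OF r d])
  also have "\<dots> \<le> 1 / (1 - r) * sqrt r ^ m"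
    using r by (intro mult_right_mono sum_power_le) auto
  finally show ?thesis by simp
qed

lemma sum_mult_power_lag_far_le:
  fixes r :: real
  assumes r: "0 < r" "r < 1" and d: "2 * d \<le> m"
  shows "(\<Sum>l<N. real (l + m) * r ^ nat \<bar>int (l + m) - int d\<bar>)
    \<le> sqrt r ^ m * (real m / (1 - r) + 1 / (1 - sqrt r) ^ 2)"
proof -
  have "(\<Sum>l<N. real (l + m) * r ^ nat \<bar>int (l + m) - int d\<bar>) \<le> (\<Sum>l<N. real (l + m) * (r ^ l * sqrt r ^ m))"
    by (intro sum_mono mult_left_mono power_lag_le_far[OF r d]) auto
  also have "\<dots> = sqrt r ^ m * (real m * (\<Sum>l<N. r ^ l) + (\<Sum>l<N. real l * r ^ l))"
    by (simp add: sum_distrib_left sum_distrib_right sum.distrib algebra_simps)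
  also have "\<dots> \<le> sqrt r ^ m * (real m * (1 / (1 - r)) + 1 / (1 - sqrt r) ^ 2)"
    using r by (intro mult_left_mono add_mono sum_power_le sum_mult_power_le) auto
  finally show ?thesis by simp
qed

section \<open>Bounds on theta, Theta and Xi\<close>

lemma sum_lag_window_le:
  fixes h :: "int \<Rightarrow> real"
  assumes "\<And>x. h x \<ge> 0"
  shows "(\<Sum>l\<in>{max (i - int s) 1 .. i - int Mn - 1}. h l) \<le> (\<Sum>a\<in>{1..s}. h (i - int a))"
proof -
  have "{max (i - int s) 1 .. i - int Mn - 1} \<subseteq> (\<lambda>a. i - int a) ` {1..s}"
  proof
    fix x assume "x \<in> {max (i - int s) 1 .. i - int Mn - 1}"
    then have "nat (i - x) \<in> {1..s}" "x = i - int (nat (i - x))" by auto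
    then show "x \<in> (\<lambda>a. i - int a) ` {1..s}" by blast
  qed
  then have "(\<Sum>l\<in>{max (i - int s) 1 .. i - int Mn - 1}. h l) \<le> (\<Sum>l\<in>(\<lambda>a. i - int a) ` {1..s}. h l)"
    using assms by (intro sum_mono2) auto
  also have "\<dots> = (\<Sum>a\<in>{1..s}. h (i - int a))"
    by (subst sum.reindex) (auto simp: inj_on_def)
  finally show ?thesis .
qed

text \<open>Writing the window index as \<open>l = i - a\<close>, the four factors of \<open>trW_factors\<close> sit at the
  times \<open>i - d\<close> for \<open>d \<in> {k, a + k, 0, a}\<close>.\<close>

definition lag_weight :: "real \<Rightarrow> nat \<Rightarrow> nat \<Rightarrow> real" where
  "lag_weight r s l = (\<Sum>k\<in>{1..s}. \<Sum>a\<in>{1..s}. \<Sum>q<4. r ^ nat \<bar>int l - int ([k, a + k, 0, a] ! q)\<bar>)"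

lemma lag_weight_nonneg: "0 < r \<Longrightarrow> 0 \<le> lag_weight r s l"
  unfolding lag_weight_def by (intro sum_nonneg) auto

lemma sum_lag_weight_le:
  assumes bound: "\<And>d. d \<le> 2 * s \<Longrightarrow> (\<Sum>l<N. f l * r ^ nat \<bar>int (l + m) - int d\<bar>) \<le> B"
  shows "(\<Sum>l<N. f l * lag_weight r s (l + m)) \<le> 4 * real s ^ 2 * B"
proof -
  have offset: "[k, a + k, 0, a] ! q \<le> 2 * s" if "k \<le> s" "a \<le> s" "q < 4" for k a q
    using that by (auto simp: less_Suc_eq numeral_eq_Suc)
  let ?g = "\<lambda>k a q l. f l * r ^ nat \<bar>int (l + m) - int ([k, a + k, 0, a] ! q)\<bar>"
  have "(\<Sum>l<N. f l * lag_weight r s (l + m)) = (\<Sum>l<N. \<Sum>k\<in>{1..s}. \<Sum>a\<in>{1..s}. \<Sum>q<4. ?g k a q l)"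
    unfolding lag_weight_def sum_distrib_left ..
  also have "\<dots> = (\<Sum>k\<in>{1..s}. \<Sum>l<N. \<Sum>a\<in>{1..s}. \<Sum>q<4. ?g k a q l)"
    by (rule sum.swap)
  also have "\<dots> = (\<Sum>k\<in>{1..s}. \<Sum>a\<in>{1..s}. \<Sum>l<N. \<Sum>q<4. ?g k a q l)"
    by (rule sum.cong[OF refl], rule sum.swap)
  also have "\<dots> = (\<Sum>k\<in>{1..s}. \<Sum>a\<in>{1..s}. \<Sum>q<4. \<Sum>l<N. ?g k a q l)"
    by (rule sum.cong[OF refl], rule sum.cong[OF refl], rule sum.swap)
  also have "\<dots> \<le> (\<Sum>k\<in>{1..s}. \<Sum>a\<in>{1..s}. \<Sum>q<(4::nat). B)"
    by (intro sum_mono bound offset) auto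
  also have "\<dots> = 4 * real s ^ 2 * B"
    by (simp add: power2_eq_square)
  finally show ?thesis .
qed

lemma real_le_power2: "real s \<le> real s ^ 2"
  by (cases s) (auto simp: power2_eq_square)

lemma divide_mult_square: "C / real s * (real s ^ 2 * X) = C * real s * (X :: real)"
  by (cases "s = 0") (simp_all add: power2_eq_square field_simps)

lemma suminf_ennreal_le:
  fixes g :: "nat \<Rightarrow> real"
  assumes "\<And>l. 0 \<le> g l" and "\<And>N. (\<Sum>l<N. g l) \<le> B"
  shows "(\<Sum>l. ennreal (g l)) \<le> ennreal B"
proof (rule suminf_le_const[OF summableI])
  fix N
  have "(\<Sum>l<N. ennreal (g l)) = ennreal (\<Sum>l<N. g l)"
    using assms(1) by simp
  also have "\<dots> \<le> ennreal B"
    using assms(2) by (rule ennreal_leI)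
  finally show "(\<Sum>l<N. ennreal (g l)) \<le> ennreal B" .
qed

context coupled_filter
begin

definition theta_constant :: "real \<Rightarrow> real" where
  "theta_constant B = 2 * B * coupling_constant * real CARD('p) ^ 2"

lemma theta_constant_pos: "B > 0 \<Longrightarrow> theta_constant B > 0"
  using coupling_constant_ge_1 by (simp add: theta_constant_def)

lemma theta_le:
  fixes K :: "real \<Rightarrow> real"
  assumes K: "\<forall>x. \<bar>K x\<bar> \<le> B" and B: "B > 0" and p: "1 \<le> p" "p \<le> 3"
  shows "theta M H \<eta> \<eta>' n K \<tau> s Mn (real p) l
    \<le> ennreal (theta_constant B / real s * lag_weight \<rho> s l)"
proof (cases "s = 0")
  case True
  have trW_0: "trW H \<zeta> n K \<tau> 0 Mn t u i \<omega> = 0" for \<zeta> t u i \<omega>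
    by (simp add: trW_def Wmat_def)
  have "Lnorm M (real p) (\<lambda>\<omega>. trW H \<eta> n K \<tau> 0 Mn t u i \<omega>
                                - trW H (perturb \<eta> \<eta>' (i - int l)) n K \<tau> 0 Mn t u i \<omega>) = 0" for t u i
    using p by (simp add: trW_0 Lnorm_def)
  then show ?thesis
    using True unfolding theta_def by (intro SUP_least) (auto split: prod.splits)
next
  case False
  let ?c = "2 * B / real s * coupling_constant"
  show ?thesis
    unfolding theta_def
  proof (rule SUP_least, clarify)
    fix t u i assume u: "u \<in> {0..1::real}"
    let ?L = "{max (i - int s) 1 .. i - int Mn - 1}"
    have lag_sum: "(\<Sum>q<4. \<rho> ^ nat \<bar>[i - int k, (i - int a) - int k, i, i - int a] ! q - (i - int l)\<bar>)
        = (\<Sum>q<4. \<rho> ^ nat \<bar>int l - int ([k, a + k, 0, a] ! q)\<bar>)" for k a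
      by (simp add: eval_nat_numeral algebra_simps)
    have "(\<Sum>((k, l'), (r, j), q) \<in> ({1..s} \<times> ?L) \<times> (UNIV \<times> UNIV :: ('p \<times> 'p) set) \<times> {..<4}.
            ?c * \<rho> ^ nat \<bar>[i - int k, l' - int k, i, l'] ! q - (i - int l)\<bar>)
        = (\<Sum>k\<in>{1..s}. \<Sum>l'\<in>?L. real CARD('p) ^ 2 * ?c *
             (\<Sum>q<4. \<rho> ^ nat \<bar>[i - int k, l' - int k, i, l'] ! q - (i - int l)\<bar>))"
      unfolding sum_nested_product by (simp add: power2_eq_square sum_distrib_left mult_ac)
    also have "\<dots> \<le> (\<Sum>k\<in>{1..s}. \<Sum>a\<in>{1..s}. real CARD('p) ^ 2 * ?c *
             (\<Sum>q<4. \<rho> ^ nat \<bar>[i - int k, (i - int a) - int k, i, i - int a] ! q - (i - int l)\<bar>))"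
      by (intro sum_mono sum_lag_window_le mult_nonneg_nonneg sum_nonneg)
        (use B coupling_constant_ge_1 rho in auto)
    also have "\<dots> = theta_constant B / real s * lag_weight \<rho> s l"
      unfolding lag_sum lag_weight_def sum_distrib_left by (simp add: theta_constant_def mult_ac)
    finally show "Lnorm M (real p) (\<lambda>\<omega>. trW H \<eta> n K \<tau> s Mn t u i \<omega>
                                 - trW H (perturb \<eta> \<eta>' (i - int l)) n K \<tau> s Mn t u i \<omega>)
        \<le> ennreal (theta_constant B / real s * lag_weight \<rho> s l)"
      using Lnorm_trW_perturb_le[OF u K B p, of s n \<tau> Mn t i "i - int l"] False
      by (auto elim!: order_trans intro: ennreal_leI)
  qed
qed

lemma suminf_weighted_theta_le:
  fixes K :: "real \<Rightarrow> real"
  assumes K: "\<forall>x. \<bar>K x\<bar> \<le> B" and B: "B > 0" and p: "1 \<le> p" "p \<le> 3"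
    and w: "\<And>l. 0 \<le> w l" and W: "\<And>N. (\<Sum>l<N. w (l + m) * lag_weight \<rho> s (l + m)) \<le> W"
  shows "(\<Sum>l. ennreal (w (l + m)) * theta M H \<eta> \<eta>' n K \<tau> s Mn (real p) (l + m))
    \<le> ennreal (theta_constant B / real s * W)"
proof -
  let ?C = "theta_constant B / real s"
  have C: "?C \<ge> 0"
    using theta_constant_pos[OF B] by simp
  have "ennreal (w (l + m)) * theta M H \<eta> \<eta>' n K \<tau> s Mn (real p) (l + m)
      \<le> ennreal (?C * (w (l + m) * lag_weight \<rho> s (l + m)))" for l
  proof -
    have "ennreal (w (l + m)) * theta M H \<eta> \<eta>' n K \<tau> s Mn (real p) (l + m)
        \<le> ennreal (w (l + m)) * ennreal (?C * lag_weight \<rho> s (l + m))"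
      by (intro mult_left_mono theta_le[OF K B p]) simp
    also have "\<dots> = ennreal (w (l + m) * (?C * lag_weight \<rho> s (l + m)))"
      using C w lag_weight_nonneg[OF rho(1)] by (intro ennreal_mult[symmetric] mult_nonneg_nonneg) auto
    also have "\<dots> = ennreal (?C * (w (l + m) * lag_weight \<rho> s (l + m)))"
      by (simp add: mult_ac)
    finally show ?thesis .
  qed
  then have "(\<Sum>l. ennreal (w (l + m)) * theta M H \<eta> \<eta>' n K \<tau> s Mn (real p) (l + m))
      \<le> (\<Sum>l. ennreal (?C * (w (l + m) * lag_weight \<rho> s (l + m))))"
    by (intro suminf_le summableI)
  also have "\<dots> \<le> ennreal (?C * W)"
  proof (rule suminf_ennreal_le)
    show "0 \<le> ?C * (w (l + m) * lag_weight \<rho> s (l + m))" for l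
      using C w lag_weight_nonneg[OF rho(1)] by (intro mult_nonneg_nonneg) auto
    show "(\<Sum>l<N. ?C * (w (l + m) * lag_weight \<rho> s (l + m))) \<le> ?C * W" for N
      unfolding sum_distrib_left[symmetric] using W C by (rule mult_left_mono)
  qed
  finally show ?thesis .
qed

lemma Theta_le:
  fixes K :: "real \<Rightarrow> real"
  assumes K: "\<forall>x. \<bar>K x\<bar> \<le> B" and B: "B > 0" and p: "1 \<le> p" "p \<le> 3"
    and W: "\<And>N. (\<Sum>l<N. lag_weight \<rho> s (l + m)) \<le> W"
  shows "Theta M H \<eta> \<eta>' n K \<tau> s Mn (real p) m \<le> ennreal (theta_constant B / real s * W)"
  using suminf_weighted_theta_le[OF K B p, of "\<lambda>_. 1" m s W] W by (simp add: Theta_def)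

lemma Xi_le:
  fixes K :: "real \<Rightarrow> real"
  assumes K: "\<forall>x. \<bar>K x\<bar> \<le> B" and B: "B > 0" and p: "1 \<le> p" "p \<le> 3"
    and W: "\<And>N. (\<Sum>l<N. real (l + m) * lag_weight \<rho> s (l + m)) \<le> W"
  shows "Xi M H \<eta> \<eta>' n K \<tau> s Mn (real p) m \<le> ennreal (theta_constant B / real s * W)"
  using suminf_weighted_theta_le[OF K B p, of real m s W] W
  by (simp add: Xi_def ennreal_of_nat_eq_real_of_nat)

lemma Theta_near_le:
  fixes K :: "real \<Rightarrow> real"
  assumes K: "\<forall>x. \<bar>K x\<bar> \<le> B" and B: "B > 0" and p: "1 \<le> p" "p \<le> 3"
  shows "Theta M H \<eta> \<eta>' n K \<tau> s Mn (real p) m \<le> ennreal (theta_constant B * (8 / (1 - \<rho>)) * real s)"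
proof -
  have "(\<Sum>l<N. 1 * \<rho> ^ nat \<bar>int (l + m) - int d\<bar>) \<le> 2 / (1 - \<rho>)" for d N
    using sum_power_lag_le[OF rho(1,2)] by simp
  then have "(\<Sum>l<N. 1 * lag_weight \<rho> s (l + m)) \<le> 4 * real s ^ 2 * (2 / (1 - \<rho>))" for N
    by (rule sum_lag_weight_le)
  then have "(\<Sum>l<N. lag_weight \<rho> s (l + m)) \<le> real s ^ 2 * (4 * (2 / (1 - \<rho>)))" for N
    by (simp add: mult_ac)
  then have "Theta M H \<eta> \<eta>' n K \<tau> s Mn (real p) m
      \<le> ennreal (theta_constant B / real s * (real s ^ 2 * (4 * (2 / (1 - \<rho>)))))"
    by (rule Theta_le[OF K B p])
  then show ?thesis
    unfolding divide_mult_square by (simp add: mult_ac)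
qed

lemma Xi_near_le:
  fixes K :: "real \<Rightarrow> real"
  assumes K: "\<forall>x. \<bar>K x\<bar> \<le> B" and B: "B > 0" and p: "1 \<le> p" "p \<le> 3"
  shows "Xi M H \<eta> \<eta>' n K \<tau> s Mn (real p) m
    \<le> ennreal (theta_constant B * (16 / (1 - \<rho>) + 8 / (1 - sqrt \<rho>) ^ 2) * real s ^ 2)"
proof -
  let ?C = "theta_constant B" and ?W = "real (2 * s) * (2 / (1 - \<rho>)) + 2 / (1 - sqrt \<rho>) ^ 2"
  have "(\<Sum>l<N. real (l + m) * \<rho> ^ nat \<bar>int (l + m) - int d\<bar>) \<le> ?W" if "d \<le> 2 * s" for d N
  proof -
    have "real d * (2 / (1 - \<rho>)) \<le> real (2 * s) * (2 / (1 - \<rho>))"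
      using that rho by (intro mult_right_mono) auto
    then show ?thesis
      using sum_mult_power_lag_le[OF rho(1,2), where N=N and m=m and d=d] by linarith
  qed
  then have "(\<Sum>l<N. real (l + m) * lag_weight \<rho> s (l + m)) \<le> 4 * real s ^ 2 * ?W" for N
    by (rule sum_lag_weight_le)
  then have "(\<Sum>l<N. real (l + m) * lag_weight \<rho> s (l + m)) \<le> real s ^ 2 * (4 * ?W)" for N
    by (simp only: mult_ac)
  then have "Xi M H \<eta> \<eta>' n K \<tau> s Mn (real p) m \<le> ennreal (?C / real s * (real s ^ 2 * (4 * ?W)))"
    by (rule Xi_le[OF K B p])
  moreover have "?C / real s * (real s ^ 2 * (4 * ?W)) \<le> ?C * (16 / (1 - \<rho>) + 8 / (1 - sqrt \<rho>) ^ 2) * real s ^ 2"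
  proof -
    have "?C / real s * (real s ^ 2 * (4 * ?W))
        = ?C * (real s ^ 2 * (16 / (1 - \<rho>)) + real s * (8 / (1 - sqrt \<rho>) ^ 2))"
      unfolding divide_mult_square by (simp add: power2_eq_square algebra_simps)
    also have "\<dots> \<le> ?C * (real s ^ 2 * (16 / (1 - \<rho>)) + real s ^ 2 * (8 / (1 - sqrt \<rho>) ^ 2))"
      using theta_constant_pos[OF B] real_le_power2[of s]
      by (intro mult_left_mono add_left_mono mult_right_mono) auto
    also have "\<dots> = ?C * (16 / (1 - \<rho>) + 8 / (1 - sqrt \<rho>) ^ 2) * real s ^ 2"
      by (simp add: algebra_simps)
    finally show ?thesis .
  qed
  ultimately show ?thesis
    by (meson ennreal_leI order_trans)
qed

lemma Theta_far_le:
  fixes K :: "real \<Rightarrow> real"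
  assumes K: "\<forall>x. \<bar>K x\<bar> \<le> B" and B: "B > 0" and p: "1 \<le> p" "p \<le> 3" and m: "4 * s < m"
  shows "Theta M H \<eta> \<eta>' n K \<tau> s Mn (real p) m
    \<le> ennreal (theta_constant B / (1 - \<rho>) * (real m * sqrt \<rho> ^ m))"
proof -
  let ?C = "theta_constant B" and ?W = "sqrt \<rho> ^ m / (1 - \<rho>)"
  have "(\<Sum>l<N. 1 * \<rho> ^ nat \<bar>int (l + m) - int d\<bar>) \<le> ?W" if "d \<le> 2 * s" for d N
    using sum_power_lag_far_le[OF rho(1,2)] that m by simp
  then have "(\<Sum>l<N. 1 * lag_weight \<rho> s (l + m)) \<le> 4 * real s ^ 2 * ?W" for N
    by (rule sum_lag_weight_le)
  then have "Theta M H \<eta> \<eta>' n K \<tau> s Mn (real p) m \<le> ennreal (?C / real s * (real s ^ 2 * (4 * ?W)))"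
    by (intro Theta_le[OF K B p]) (simp add: mult_ac)
  moreover have "?C / real s * (real s ^ 2 * (4 * ?W)) \<le> ?C / (1 - \<rho>) * (real m * sqrt \<rho> ^ m)"
  proof -
    have "?C / real s * (real s ^ 2 * (4 * ?W)) = ?C / (1 - \<rho>) * (real (4 * s) * sqrt \<rho> ^ m)"
      unfolding divide_mult_square by (simp add: algebra_simps)
    also have "\<dots> \<le> ?C / (1 - \<rho>) * (real m * sqrt \<rho> ^ m)"
      using m rho theta_constant_pos[OF B] by (intro mult_left_mono mult_right_mono) auto
    finally show ?thesis .
  qed
  ultimately show ?thesis
    by (meson ennreal_leI order_trans)
qed

lemma Xi_far_le:
  fixes K :: "real \<Rightarrow> real"
  assumes K: "\<forall>x. \<bar>K x\<bar> \<le> B" and B: "B > 0" and p: "1 \<le> p" "p \<le> 3" and m: "4 * s < m"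
  shows "Xi M H \<eta> \<eta>' n K \<tau> s Mn (real p) m
    \<le> ennreal (theta_constant B * (1 / (1 - \<rho>) + 1 / (1 - sqrt \<rho>) ^ 2) * real m * (real m * sqrt \<rho> ^ m))"
proof -
  let ?C = "theta_constant B" and ?D = "1 / (1 - \<rho>) + 1 / (1 - sqrt \<rho>) ^ 2"
  let ?W = "sqrt \<rho> ^ m * (real m / (1 - \<rho>) + 1 / (1 - sqrt \<rho>) ^ 2)"
  have "(\<Sum>l<N. real (l + m) * \<rho> ^ nat \<bar>int (l + m) - int d\<bar>) \<le> ?W" if "d \<le> 2 * s" for d N
    using sum_mult_power_lag_far_le[OF rho(1,2)] that m by simp
  then have "(\<Sum>l<N. real (l + m) * lag_weight \<rho> s (l + m)) \<le> 4 * real s ^ 2 * ?W" for N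
    by (rule sum_lag_weight_le)
  then have "Xi M H \<eta> \<eta>' n K \<tau> s Mn (real p) m \<le> ennreal (?C / real s * (real s ^ 2 * (4 * ?W)))"
    by (intro Xi_le[OF K B p]) (simp add: mult_ac)
  moreover have "?C / real s * (real s ^ 2 * (4 * ?W)) \<le> ?C * ?D * real m * (real m * sqrt \<rho> ^ m)"
  proof -
    have "real m / (1 - \<rho>) + 1 / (1 - sqrt \<rho>) ^ 2 \<le> real m * ?D"
      using m rho by (simp add: distrib_left divide_right_mono mult_le_cancel_right1 le_divide_eq_1)
    then have "real (4 * s) * ?W \<le> real m * (sqrt \<rho> ^ m * (real m * ?D))"
      using m rho by (intro mult_mono mult_left_mono) auto
    then have "?C * (real (4 * s) * ?W) \<le> ?C * (real m * (sqrt \<rho> ^ m * (real m * ?D)))"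
      using theta_constant_pos[OF B] by (intro mult_left_mono) auto
    then show ?thesis
      unfolding divide_mult_square by (simp only: of_nat_mult of_nat_numeral mult_ac)
  qed
  ultimately show ?thesis
    by (meson ennreal_leI order_trans)
qed

lemma Theta_Xi_geometric_decay:
  fixes K :: "real \<Rightarrow> real"
  assumes K: "\<forall>x. \<bar>K x\<bar> \<le> B" and B: "B > 0" and p: "1 \<le> p" "p \<le> 3"
  obtains C x where "C > 0" "0 < x" "x < 1"
    and "\<And>n \<tau> s Mn m. 4 * s < m \<Longrightarrow>
            Theta M H \<eta> \<eta>' n K \<tau> s Mn (real p) m < ennreal (C * x ^ m) \<and>
            Xi M H \<eta> \<eta>' n K \<tau> s Mn (real p) m < ennreal (C * real m * x ^ m)"
proof -
  define x where "x = sqrt (sqrt \<rho>)"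
  have x: "0 < x" "x < 1"
    using rho by (auto simp: x_def)
  have geometric: "real m * sqrt \<rho> ^ m \<le> x ^ m / (1 - x)" for m
    unfolding x_def using rho by (intro real_mult_power_le_sqrt) auto
  define D where "D = 1 / (1 - \<rho>) + 1 / (1 - sqrt \<rho>) ^ 2"
  have D: "1 / (1 - \<rho>) \<le> D"
    using rho by (simp add: D_def)
  moreover have "0 < 1 / (1 - \<rho>)"
    using rho by simp
  ultimately have "D > 0"
    by linarith
  define C where "C = theta_constant B * D / (1 - x)"
  have C: "C > 0"
    using theta_constant_pos[OF B] \<open>D > 0\<close> x by (simp add: C_def)
  have "Theta M H \<eta> \<eta>' n K \<tau> s Mn (real p) m < ennreal ((C + 1) * x ^ m) \<and>
        Xi M H \<eta> \<eta>' n K \<tau> s Mn (real p) m < ennreal ((C + 1) * real m * x ^ m)"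
    if m: "4 * s < m" for n \<tau> s Mn m
  proof
    have "theta_constant B / (1 - \<rho>) * (real m * sqrt \<rho> ^ m) \<le> theta_constant B * D * (x ^ m / (1 - x))"
      using theta_constant_pos[OF B] D \<open>D > 0\<close> rho by (intro mult_mono geometric) (auto simp: divide_inverse)
    also have "\<dots> = C * x ^ m"
      by (simp add: C_def)
    also have "\<dots> < (C + 1) * x ^ m"
      using x by simp
    finally show "Theta M H \<eta> \<eta>' n K \<tau> s Mn (real p) m < ennreal ((C + 1) * x ^ m)"
      using C x by (intro le_less_trans[OF Theta_far_le[OF K B p m] ennreal_lessI]) auto
    have "theta_constant B * D * real m * (real m * sqrt \<rho> ^ m) \<le> theta_constant B * D * real m * (x ^ m / (1 - x))"
      using theta_constant_pos[OF B] \<open>D > 0\<close> rho by (intro mult_left_mono geometric) auto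
    also have "\<dots> = C * real m * x ^ m"
      by (simp add: C_def)
    also have "\<dots> < (C + 1) * real m * x ^ m"
      using x m by simp
    finally show "Xi M H \<eta> \<eta>' n K \<tau> s Mn (real p) m < ennreal ((C + 1) * real m * x ^ m)"
      using C x m by (intro le_less_trans[OF Xi_far_le[OF K B p m, folded D_def] ennreal_lessI]) auto
  qed
  with C x show ?thesis
    by (intro that[of "C + 1" x]) auto
qed

lemma Theta_Xi_polynomial_bound:
  fixes K :: "real \<Rightarrow> real"
  assumes K: "\<forall>x. \<bar>K x\<bar> \<le> B" and B: "B > 0" and p: "1 \<le> p" "p \<le> 3"
  obtains C where "\<And>n \<tau> s Mn m.
            Theta M H \<eta> \<eta>' n K \<tau> s Mn (real p) m \<le> ennreal (C * real s) \<and>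
            Xi M H \<eta> \<eta>' n K \<tau> s Mn (real p) m \<le> ennreal (C * real s ^ 2)"
proof (rule that, rule conjI)
  let ?C = "theta_constant B * (16 / (1 - \<rho>) + 8 / (1 - sqrt \<rho>) ^ 2)"
  fix n \<tau> s Mn m
  have "8 / (1 - \<rho>) \<le> 16 / (1 - \<rho>)" "0 \<le> 8 / (1 - sqrt \<rho>) ^ 2"
    using rho by (auto intro: divide_right_mono)
  then have "8 / (1 - \<rho>) \<le> 16 / (1 - \<rho>) + 8 / (1 - sqrt \<rho>) ^ 2"
    by linarith
  then have "theta_constant B * (8 / (1 - \<rho>)) * real s \<le> ?C * real s"
    using theta_constant_pos[OF B] by (intro mult_right_mono mult_left_mono) auto
  then show "Theta M H \<eta> \<eta>' n K \<tau> s Mn (real p) m \<le> ennreal (?C * real s)"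
    using Theta_near_le[OF K B p] by (meson ennreal_leI order_trans)
  show "Xi M H \<eta> \<eta>' n K \<tau> s Mn (real p) m \<le> ennreal (?C * real s ^ 2)"
    by (rule Xi_near_le[OF K B p])
qed

end

theorem lemmaB2:
  fixes M :: "'w measure" and S :: "'s measure"
    and \<eta> \<eta>' :: "int \<Rightarrow> 'w \<Rightarrow> 's"
    and H L :: "real \<Rightarrow> real \<Rightarrow> (nat \<Rightarrow> 's) \<Rightarrow> real^'p::finite"
    and m :: "real \<Rightarrow> real \<Rightarrow> real^'p"
    and K :: "real \<Rightarrow> real"
    and b \<tau> :: "nat \<Rightarrow> real" and sN Mn N :: "nat \<Rightarrow> nat"
    and s chi chi0 K0 t0 c0 s_star M0 M1 c c' \<alpha> th q q' :: real
  assumes prob: "prob_space M"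
    (* innovations: (eta_i) i.i.d., (eta'_i) an independent copy *)
    and indep: "prob_space.indep_vars M (\<lambda>_. S) (\<lambda>x. case x of Inl i \<Rightarrow> \<eta> i | Inr i \<Rightarrow> \<eta>' i) UNIV"
    and ident: "\<forall>i. distr M S (\<eta> i) = distr M S (\<eta> 0) \<and> distr M S (\<eta>' i) = distr M S (\<eta> 0)"
    (* measurable centered filter *)
    and H_meas: "\<forall>t u. H t u \<in> borel_measurable (PiM UNIV (\<lambda>_. S))"
    and centered: "\<forall>t u j. (\<integral>\<omega>. H t u (Fseq \<eta> 0 \<omega>) $ j \<partial>M) = 0"
    (* local stationarity *)
    and chi: "0 < chi" "chi < 1"
    and phys: "\<exists>C. \<forall>i::nat. \<forall>t. \<forall>u\<in>{0..1}. \<forall>j.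
        Lnorm M 1 (\<lambda>\<omega>. H t u (Fseq \<eta> (int i) \<omega>) $ j
                      - H t u (Fseq (perturb \<eta> \<eta>' 0) (int i) \<omega>) $ j) \<le> ennreal (C * chi ^ i)"
    and lip: "\<forall>t1 t2. \<forall>u\<in>{0..1}. \<forall>j.
        Lnorm M 2 (\<lambda>\<omega>. H t1 u (Fseq \<eta> 0 \<omega>) $ j - H t2 u (Fseq \<eta> 0 \<omega>) $ j)
          \<le> ennreal (K0 * \<bar>t1 - t2\<bar>)"
    (* Assumption A(1) *)
    and A1: "t0 > 0" "\<forall>t. \<forall>u\<in>{0..1}. \<forall>j.
        (\<integral>\<^sup>+\<omega>. ennreal (exp (t0 * \<bar>H t u (Fseq \<eta> 0 \<omega>) $ j\<bar>)) \<partial>M) < ennreal c0"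
    (* Assumption A(2) *)
    and A2_deriv: "\<forall>t x j. \<forall>u\<in>{0..1}.
        ((\<lambda>v. H t v x $ j) has_real_derivative (L t u x $ j)) (at u within {0..1})"
    and A2_meas: "\<forall>t u. L t u \<in> borel_measurable (PiM UNIV (\<lambda>_. S))"
    and A2_sstar: "s_star \<ge> 4" and A2_chi0: "0 < chi0" "chi0 < 1"
    and A2_phys: "\<exists>C. \<forall>i::nat. \<forall>t. \<forall>u\<in>{0..1}. \<forall>j.
        Lnorm M s_star (\<lambda>\<omega>. L t u (Fseq \<eta> (int i) \<omega>) $ j
                      - L t u (Fseq (perturb \<eta> \<eta>' 0) (int i) \<omega>) $ j) \<le> ennreal (C * chi0 ^ i)"
    and A2_bound: "\<forall>i::int. \<forall>t. \<forall>u\<in>{0..1}. \<forall>j.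
        Lnorm M s_star (\<lambda>\<omega>. L t u (Fseq \<eta> i \<omega>) $ j) < ennreal M0"
    (* Assumption A(3) *)
    and A3: "\<forall>u\<in>{0..1}. \<forall>t\<in>{0..1}.
        ((\<lambda>t. m t u) has_vector_derivative m1 t u) (at t within {0..1}) \<and>
        ((\<lambda>t. m1 t u) has_vector_derivative m2 t u) (at t within {0..1}) \<and>
        ((\<lambda>t. m2 t u) has_vector_derivative m3 t u) (at t within {0..1}) \<and>
        norm (m3 t u) \<le> M1"
    (* Assumption A(4) *)
    and A4: "c > 0" "\<forall>t\<in>{0..1}. \<forall>u\<in>{0..1}. \<forall>lam v.
        v \<noteq> 0 \<and> (Gamma0 M H \<eta> t u ** transpose (Gamma0 M H \<eta> t u)) *v v = lam *\<^sub>R v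
        \<longrightarrow> lam \<ge> c"
    (* kernel *)
    and K_sym: "\<forall>x. K (- x) = K x" and K_supp: "\<forall>x. x \<notin> {-1<..<1} \<longrightarrow> K x = 0"
    and K_int: "K integrable_on UNIV" "integral UNIV K = 1"
    and K_bdd: "bounded (range K)"
    (* bandwidths and tuning sequences *)
    and b_range: "\<forall>n. 0 < b n \<and> b n < 1" and tau_range: "\<forall>n. 0 < \<tau> n \<and> \<tau> n < 1"
    and N_rate: "\<alpha> \<ge> 0" "(\<lambda>n. real (N n)) \<in> O(\<lambda>n. real n powr \<alpha>)"
    and s_rate: "0 \<le> th" "th < 1/11"
        "(\<lambda>n. real (sN n) ^ 2) \<in> o(\<lambda>n. (real n * \<tau> n) powr th)"
    and tau_lim: "\<tau> \<longlonglongrightarrow> 0"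
    and f_lim: "q' \<ge> 2" "2 \<le> q" "q \<le> s_star / 2"
        "(\<lambda>n. real (sN n) * (real n * real (N n)) powr (1 / q)
                 * (1 / (real n * \<tau> n) + 1 / real (N n))
             + real (sN n) * \<tau> n powr (- 2 / q') * sqrt (real n * \<tau> n)
                 * (b n ^ 2 + 1 / (real n * b n))
             + \<tau> n powr (- 2 / q') * sqrt (real (sN n) * \<tau> n / b n)) \<longlonglongrightarrow> 0"
    and b_lim: "(\<lambda>n. ln (real n) ^ 4 / (real n * b n)) \<longlonglongrightarrow> 0"
    and M_lower: "c' > 0" "\<forall>\<^sub>F n in sequentially. real (Mn n) > c' * ln (real n)"
    and M_rate: "(\<lambda>n. real (Mn n)) \<in> o(\<lambda>n. real (sN n))"
    and s_log: "filterlim (\<lambda>n. real (sN n) / ln (real n)) at_top sequentially"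
    and s_val: "s = 2 \<or> s = 3"
  shows
    "(\<exists>C>0. \<exists>chi1.  0 < chi1 \<and> chi1 < 1 \<and>
        (\<forall>\<^sub>F n in sequentially. \<forall>mm::nat. mm > 4 * sN n \<longrightarrow>
            Theta M H \<eta> \<eta>' n K (\<tau> n) (sN n) (Mn n) s mm < ennreal (C * chi1 ^ mm) \<and>
            Xi M H \<eta> \<eta>' n K (\<tau> n) (sN n) (Mn n) s mm < ennreal (C * real mm * chi1 ^ mm)))
     \<and> (\<exists>C. \<forall>\<^sub>F n in sequentially. \<forall>mm::nat. mm \<le> 4 * sN n \<longrightarrow>
            Theta M H \<eta> \<eta>' n K (\<tau> n) (sN n) (Mn n) s mm \<le> ennreal (C * real (sN n)) \<and>
            Xi M H \<eta> \<eta>' n K (\<tau> n) (sN n) (Mn n) s mm \<le> ennreal (C * real (sN n) ^ 2))"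
proof -
  obtain C where "\<forall>i::nat. \<forall>t. \<forall>u\<in>{0..1}. \<forall>j.
      Lnorm M 1 (\<lambda>\<omega>. H t u (Fseq \<eta> (int i) \<omega>) $ j - H t u (Fseq (perturb \<eta> \<eta>' 0) (int i) \<omega>) $ j)
        \<le> ennreal (C * chi ^ i)"
    using phys by blast
  then interpret coupled_filter M S \<eta> \<eta>' H C chi t0 c0
    by (intro coupled_filter.intro iid_innovations.intro iid_innovations_axioms.intro
        coupled_filter_axioms.intro prob indep ident H_meas chi A1)
  obtain B where B: "\<forall>x. \<bar>K x\<bar> \<le> B" "B > 0"
    using K_bdd unfolding bounded_pos by auto
  have "\<exists>p::nat. s = real p \<and> 1 \<le> p \<and> p \<le> 3"
    using s_val by (elim disjE) (rule exI[of _ "2::nat"], simp, rule exI[of _ "3::nat"], simp)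
  then obtain p :: nat where s_p: "s = real p" and p: "1 \<le> p" "p \<le> 3"
    by blast
  obtain C1 x where "C1 > 0" "0 < x" "x < 1" and geometric_decay: "\<And>n \<tau> s Mn m. 4 * s < m \<Longrightarrow>
      Theta M H \<eta> \<eta>' n K \<tau> s Mn (real p) m < ennreal (C1 * x ^ m) \<and>
      Xi M H \<eta> \<eta>' n K \<tau> s Mn (real p) m < ennreal (C1 * real m * x ^ m)"
    using Theta_Xi_geometric_decay[OF B p] by blast
  obtain C2 where polynomial_bound: "\<And>n \<tau> s Mn m.
      Theta M H \<eta> \<eta>' n K \<tau> s Mn (real p) m \<le> ennreal (C2 * real s) \<and>
      Xi M H \<eta> \<eta>' n K \<tau> s Mn (real p) m \<le> ennreal (C2 * real s ^ 2)"
    using Theta_Xi_polynomial_bound[OF B p] by blast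
  show ?thesis
    unfolding s_p
  proof (intro conjI)
    show "\<exists>C>0. \<exists>chi1. 0 < chi1 \<and> chi1 < 1 \<and>
        (\<forall>\<^sub>F n in sequentially. \<forall>mm::nat. mm > 4 * sN n \<longrightarrow>
            Theta M H \<eta> \<eta>' n K (\<tau> n) (sN n) (Mn n) (real p) mm < ennreal (C * chi1 ^ mm) \<and>
            Xi M H \<eta> \<eta>' n K (\<tau> n) (sN n) (Mn n) (real p) mm < ennreal (C * real mm * chi1 ^ mm))"
      using \<open>C1 > 0\<close> \<open>0 < x\<close> \<open>x < 1\<close> geometric_decay
      by (intro exI[of _ C1] exI[of _ x] conjI always_eventually allI impI) auto
    show "\<exists>C. \<forall>\<^sub>F n in sequentially. \<forall>mm::nat. mm \<le> 4 * sN n \<longrightarrow>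
            Theta M H \<eta> \<eta>' n K (\<tau> n) (sN n) (Mn n) (real p) mm \<le> ennreal (C * real (sN n)) \<and>
            Xi M H \<eta> \<eta>' n K (\<tau> n) (sN n) (Mn n) (real p) mm \<le> ennreal (C * real (sN n) ^ 2)"
      using polynomial_bound by (intro exI[of _ C2] always_eventually allI impI) auto
  qed
qed

end
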